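(* Let $X\in\mathbb{R}^{m\times n}$ and $\lambda>0$, and let $X=U\Sigma V^T$ be the SVD of $X$ with singular values $\sigma_1\ge\sigma_2\ge\cdots\ge 0$. Let $r$ be an integer attaining $\min_k \big(k+\lambda\sum_{i>k}\sigma_i^2\big)$, and let $U_1,\Sigma_1,V_1$ consist of the top $r$ left singular vectors, singular values and right singular vectors of $X$. Then an optimal solution of $$\min_{A\in\mathbb{R}^{m\times n},\,Z\in\mathbb{R}^{n\times n},\,E\in\mathbb{R}^{m\times n}} \|Z\|_*+\lambda\|E\|_F^2\quad\text{s.t.}\quad A=AZ,\ X=A+E$$ is given by $A^*=U_1\Sigma_1V_1^T$, $Z^*=V_1V_1^T$, $E^*=X-A^*$.
   Context: $\|\cdot\|_*$ denotes the nuclear norm and $\|\cdot\|_F$ the Frobenius norm. *)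

theory Defs
  imports Jordan_Normal_Form.Matrix
begin

definition is_svd :: "real mat \<Rightarrow> real mat \<Rightarrow> real mat \<Rightarrow> real mat \<Rightarrow> bool" where
  "is_svd X U S V \<longleftrightarrow>
    (let m = dim_row X; n = dim_col X in
      U \<in> carrier_mat m m \<and> V \<in> carrier_mat n n \<and> S \<in> carrier_mat m n \<and>
      transpose_mat U * U = 1\<^sub>m m \<and> transpose_mat V * V = 1\<^sub>m n \<and>
      (\<forall>i<m. \<forall>j<n. i \<noteq> j \<longrightarrow> S $$ (i, j) = 0) \<and>
      (\<forall>i<min m n. 0 \<le> S $$ (i, i)) \<and>
      (\<forall>i j. i \<le> j \<and> j < min m n \<longrightarrow> S $$ (j, j) \<le> S $$ (i, i)) \<and>
      X = U * S * transpose_mat V)"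

definition nuclear_norm :: "real mat \<Rightarrow> real" where
  "nuclear_norm M = (THE s. \<exists>U S V. is_svd M U S V \<and>
      s = (\<Sum>i<min (dim_row M) (dim_col M). S $$ (i, i)))"

definition frob_norm :: "real mat \<Rightarrow> real" where
  "frob_norm M = sqrt (\<Sum>i<dim_row M. \<Sum>j<dim_col M. (M $$ (i, j))\<^sup>2)"

end

theory Submission
  imports Defs Jordan_Normal_Form.Schur_Decomposition
begin

text \<open>
  Let \<open>A = A Z\<close> and \<open>X = A + E\<close>, and let \<open>k\<close> be the number of nonzero singular values
  of \<open>A\<close>, with SVD \<open>A = U\<^sub>A \<Sigma>\<^sub>A V\<^sub>A\<^sup>T\<close>. Since \<open>\<Sigma>\<^sub>A V\<^sub>A\<^sup>T Z = \<Sigma>\<^sub>A V\<^sub>A\<^sup>T\<close>, the first \<open>k\<close> rows of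
  \<open>V\<^sub>A\<^sup>T\<close> are fixed by \<open>Z\<close>, so the trace of \<open>V\<^sub>k V\<^sub>k\<^sup>T Z\<close> is \<open>k\<close>; a trace bound of von Neumann
  type, \<open>tr (P Q\<^sup>T Z) \<le> \<parallel>Z\<parallel>\<^sub>*\<close> for \<open>P, Q\<close> with orthonormal columns, gives \<open>\<parallel>Z\<parallel>\<^sub>* \<ge> k\<close>.
  The columns of \<open>A\<close> lie in the span of the first \<open>k\<close> left singular vectors of \<open>A\<close>, and
  projecting \<open>X\<close> onto any \<open>k\<close>-dimensional subspace keeps at most the top \<open>k\<close> squared
  singular values (Eckart--Young), so \<open>\<parallel>E\<parallel>\<^sub>F\<^sup>2 \<ge> \<Sum>\<^sub>i\<^sub>>\<^sub>k \<sigma>\<^sub>i\<^sup>2\<close>. Hence every feasible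
  point costs at least \<open>k + \<lambda> \<Sum>\<^sub>i\<^sub>>\<^sub>k \<sigma>\<^sub>i\<^sup>2 \<ge> r + \<lambda> \<Sum>\<^sub>i\<^sub>>\<^sub>r \<sigma>\<^sub>i\<^sup>2\<close>, which is exactly the
  cost of the truncated SVD.

  The nuclear norm is defined through an arbitrary SVD, so the argument also needs that every
  real matrix has an SVD (from the spectral theorem applied to \<open>X\<^sup>T X\<close>) and that the sum of
  singular values does not depend on the chosen SVD (again by the trace bound).
\<close>

lemma index_mult_mat_sum:
  fixes A B :: "'a :: comm_ring_1 mat"
  assumes "A \<in> carrier_mat m n" "B \<in> carrier_mat n p" "i < m" "j < p"
  shows "(A * B) $$ (i,j) = (\<Sum>k<n. A $$ (i,k) * B $$ (k,j))"
  using assms by (simp add: scalar_prod_def lessThan_atLeast0)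

lemma diagonal_mult_index:
  fixes D M :: "'a :: comm_ring_1 mat"
  assumes D: "D \<in> carrier_mat p q" "diagonal_mat D" and M: "M \<in> carrier_mat q r"
    and i: "i < p" "i < q" and j: "j < r"
  shows "(D * M) $$ (i,j) = D $$ (i,i) * M $$ (i,j)"
proof -
  have "(D * M) $$ (i,j) = (\<Sum>c<q. D $$ (i,c) * M $$ (c,j))"
    by (rule index_mult_mat_sum[OF D(1) M i(1) j])
  also have "\<dots> = (\<Sum>c\<in>{i}. D $$ (i,c) * M $$ (c,j))"
    by (rule sum.mono_neutral_right) (use D i in \<open>auto simp: diagonal_mat_def\<close>)
  finally show ?thesis by simp
qed

lemma mult_diagonal_index:
  fixes D M :: "'a :: comm_ring_1 mat"
  assumes M: "M \<in> carrier_mat r p" and D: "D \<in> carrier_mat p q" "diagonal_mat D"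
    and i: "i < r" and j: "j < p" "j < q"
  shows "(M * D) $$ (i,j) = M $$ (i,j) * D $$ (j,j)"
proof -
  have "(M * D) $$ (i,j) = (\<Sum>c<p. M $$ (i,c) * D $$ (c,j))"
    by (rule index_mult_mat_sum[OF M D(1) i j(2)])
  also have "\<dots> = (\<Sum>c\<in>{j}. M $$ (i,c) * D $$ (c,j))"
    by (rule sum.mono_neutral_right) (use D j in \<open>auto simp: diagonal_mat_def\<close>)
  finally show ?thesis by simp
qed

lemma mult_diagonal_index_if:
  fixes M D :: "'a :: comm_ring_1 mat"
  assumes M: "M \<in> carrier_mat r p" and D: "D \<in> carrier_mat p q" "diagonal_mat D"
    and i: "i < r" and j: "j < q"
  shows "(M * D) $$ (i,j) = (if j < p then M $$ (i,j) * D $$ (j,j) else 0)"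
proof (cases "j < p")
  case True
  then show ?thesis using mult_diagonal_index[OF M D i] j by simp
next
  case False
  then show ?thesis using index_mult_mat_sum[OF M D(1) i j] D j
    by (auto simp: diagonal_mat_def intro!: sum.neutral)
qed

lemma sprod_self_nonneg: "0 \<le> (v :: real vec) \<bullet> v"
  using conjugate_square_ge_0_vec[of v] by simp

lemma sprod_self_sum_sq:
  fixes v :: "real vec"
  assumes "v \<in> carrier_vec n"
  shows "v \<bullet> v = (\<Sum>j<n. (v $ j)\<^sup>2)"
  using assms by (simp add: scalar_prod_def lessThan_atLeast0 power2_eq_square)

lemma normalized_sprod_self:
  fixes v :: "real vec"
  assumes v: "v \<in> carrier_vec n" and pos: "0 < v \<bullet> v"
  shows "((1 / sqrt (v \<bullet> v)) \<cdot>\<^sub>v v) \<bullet> ((1 / sqrt (v \<bullet> v)) \<cdot>\<^sub>v v) = 1"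
proof -
  have "((1 / sqrt (v \<bullet> v)) \<cdot>\<^sub>v v) \<bullet> ((1 / sqrt (v \<bullet> v)) \<cdot>\<^sub>v v)
      = (v \<bullet> v) / (sqrt (v \<bullet> v))\<^sup>2"
    using v by (simp add: scalar_prod_smult_distrib smult_scalar_prod_distrib power2_eq_square)
  then show ?thesis using pos by simp
qed

lemma two_sprod_le_sprod_self_add:
  fixes a b :: "real vec"
  assumes a: "a \<in> carrier_vec n" and b: "b \<in> carrier_vec n"
  shows "2 * (a \<bullet> b) \<le> a \<bullet> a + b \<bullet> b"
proof -
  have "a \<bullet> a + b \<bullet> b - 2 * (a \<bullet> b) = (\<Sum>i<n. (a $ i - b $ i)\<^sup>2)"
    using a b by (simp add: scalar_prod_def lessThan_atLeast0 power2_eq_square algebra_simps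
        sum.distrib sum_subtractf sum_distrib_left)
  moreover have "(\<Sum>i<n. (a $ i - b $ i)\<^sup>2) \<ge> 0" by (rule sum_nonneg) simp
  ultimately show ?thesis by linarith
qed

lemma orthogonal_mat_right_inverse:
  fixes W :: "real mat"
  assumes W: "W \<in> carrier_mat n n" and WW: "transpose_mat W * W = 1\<^sub>m n"
  shows "W * transpose_mat W = 1\<^sub>m n"
  using mat_mult_left_right_inverse[OF _ W WW] W by auto

lemma orthogonal_col_sprod:
  fixes W :: "real mat"
  assumes W: "W \<in> carrier_mat n p" and WW: "transpose_mat W * W = 1\<^sub>m p"
    and ij: "i < p" "j < p"
  shows "col W i \<bullet> col W j = (if i = j then 1 else 0)"
proof -
  have "col W i \<bullet> col W j = (transpose_mat W * W) $$ (i,j)" using W ij by simp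
  also have "\<dots> = (if i = j then 1 else 0)" unfolding WW using ij by simp
  finally show ?thesis .
qed

lemma orthogonal_conj_cancel:
  fixes A W :: "real mat"
  assumes W: "W \<in> carrier_mat n n" and A: "A \<in> carrier_mat n n"
    and WW: "W * transpose_mat W = 1\<^sub>m n"
  shows "W * (transpose_mat W * A * W) * transpose_mat W = A"
proof -
  have "W * (transpose_mat W * A * W) * transpose_mat W
      = (W * transpose_mat W) * A * (W * transpose_mat W)"
    using W A by (simp add: assoc_mult_mat[of _ n n _ n _ n])
  then show ?thesis using WW A by simp
qed

lemma orthogonal_conj_mult:
  fixes W A B :: "real mat"
  assumes W: "W \<in> carrier_mat n n" and WW: "W * transpose_mat W = 1\<^sub>m n"
    and A: "A \<in> carrier_mat n n" and B: "B \<in> carrier_mat n n"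
  shows "(transpose_mat W * A * W) * (transpose_mat W * B * W) = transpose_mat W * (A * B) * W"
proof -
  have "(transpose_mat W * A * W) * (transpose_mat W * B * W)
      = transpose_mat W * (A * ((W * transpose_mat W) * (B * W)))"
    using W A B by (simp add: assoc_mult_mat[of _ n n _ n _ n])
  also have "\<dots> = transpose_mat W * (A * B) * W"
    using W A B WW by (simp add: assoc_mult_mat[of _ n n _ n _ n])
  finally show ?thesis .
qed

definition trace :: "'a :: comm_ring_1 mat \<Rightarrow> 'a" where
  "trace M = (\<Sum>i<dim_row M. M $$ (i,i))"

lemma trace_one [simp]: "trace (1\<^sub>m n :: 'a :: comm_ring_1 mat) = of_nat n"
  unfolding trace_def by simp

lemma trace_minus:
  fixes A B :: "'a :: comm_ring_1 mat"
  assumes "A \<in> carrier_mat n n" "B \<in> carrier_mat n n"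
  shows "trace (A - B) = trace A - trace B"
  using assms unfolding trace_def by (simp add: sum_subtractf)

lemma trace_mult_comm:
  fixes A B :: "'a :: comm_ring_1 mat"
  assumes A: "A \<in> carrier_mat m n" and B: "B \<in> carrier_mat n m"
  shows "trace (A * B) = trace (B * A)"
proof -
  have "trace (A * B) = (\<Sum>i<m. (A * B) $$ (i,i))" unfolding trace_def using A B by simp
  also have "\<dots> = (\<Sum>i<m. \<Sum>j<n. A $$ (i,j) * B $$ (j,i))"
    by (rule sum.cong[OF refl], rule index_mult_mat_sum[OF A B]) auto
  also have "\<dots> = (\<Sum>j<n. \<Sum>i<m. B $$ (j,i) * A $$ (i,j))"
    by (subst sum.swap) (simp add: mult.commute)
  also have "\<dots> = (\<Sum>j<n. (B * A) $$ (j,j))"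
    by (rule sum.cong[OF refl], rule index_mult_mat_sum[OF B A, symmetric]) auto
  also have "\<dots> = trace (B * A)" unfolding trace_def using A B by simp
  finally show ?thesis .
qed

lemma trace_orthogonal_conj:
  fixes A W :: "real mat"
  assumes W: "W \<in> carrier_mat n n" "transpose_mat W * W = 1\<^sub>m n" and A: "A \<in> carrier_mat n n"
  shows "trace (W * A * transpose_mat W) = trace A"
proof -
  have "trace (W * A * transpose_mat W) = trace (transpose_mat W * (W * A))"
    by (rule trace_mult_comm) (use W A in auto)
  also have "transpose_mat W * (W * A) = A"
    using W A by (simp add: assoc_mult_mat[of _ n n _ n _ n, symmetric])
  finally show ?thesis .
qed

lemma trace_mult_diagonal:
  fixes T S :: "'a :: comm_ring_1 mat"
  assumes T: "T \<in> carrier_mat n n" and S: "S \<in> carrier_mat n n" "diagonal_mat S"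
  shows "trace (T * S) = (\<Sum>i<n. T $$ (i,i) * S $$ (i,i))"
  unfolding trace_def using T mult_diagonal_index[OF T S] by simp

definition leading_cols :: "'a mat \<Rightarrow> nat \<Rightarrow> 'a mat" where
  "leading_cols W p = mat (dim_row W) p (\<lambda>(a,j). W $$ (a,j))"

lemma dim_leading_cols [simp]:
  "dim_row (leading_cols W p) = dim_row W" "dim_col (leading_cols W p) = p"
  unfolding leading_cols_def by simp_all

lemma index_leading_cols [simp]:
  "i < dim_row W \<Longrightarrow> j < p \<Longrightarrow> leading_cols W p $$ (i,j) = W $$ (i,j)"
  unfolding leading_cols_def by simp

lemma leading_cols_carrier [simp]: "W \<in> carrier_mat n m \<Longrightarrow> leading_cols W p \<in> carrier_mat n p"
  unfolding leading_cols_def by simp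

lemma leading_cols_all [simp]: "W \<in> carrier_mat n m \<Longrightarrow> leading_cols W m = W"
  unfolding leading_cols_def by (intro eq_matI) auto

lemma col_leading_cols:
  assumes "W \<in> carrier_mat n m" "j < p" "p \<le> m"
  shows "col (leading_cols W p) j = col W j"
  using assms by (intro eq_vecI) (auto simp: leading_cols_def)

lemma mat_of_cols_map_col:
  assumes "W \<in> carrier_mat n m" "p \<le> m"
  shows "mat_of_cols n (map (col W) [0..<p]) = leading_cols W p"
  using assms by (intro eq_matI) (auto simp: leading_cols_def mat_of_cols_def)

lemma leading_cols_orthonormal:
  fixes W :: "real mat"
  assumes W: "W \<in> carrier_mat n m" and WW: "transpose_mat W * W = 1\<^sub>m m" and p: "p \<le> m"
  shows "transpose_mat (leading_cols W p) * leading_cols W p = 1\<^sub>m p"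
proof (rule eq_matI)
  fix i j assume "i < dim_row (1\<^sub>m p)" "j < dim_col (1\<^sub>m p)"
  then have i: "i < p" and j: "j < p" by auto
  have Wp: "leading_cols W p \<in> carrier_mat n p" using W by simp
  have "(transpose_mat (leading_cols W p) * leading_cols W p) $$ (i,j)
      = col (leading_cols W p) i \<bullet> col (leading_cols W p) j"
    using Wp i j by simp
  also have "\<dots> = col W i \<bullet> col W j" using W i j p by (simp add: col_leading_cols)
  also have "\<dots> = 1\<^sub>m p $$ (i,j)" using orthogonal_col_sprod[OF W WW, of i j] i j p by simp
  finally show "(transpose_mat (leading_cols W p) * leading_cols W p) $$ (i,j) = 1\<^sub>m p $$ (i,j)" .
qed (use W in auto)

lemma diagonal_sandwich_index:
  fixes U D V :: "'a :: comm_ring_1 mat"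
  assumes U: "U \<in> carrier_mat m p" and D: "D \<in> carrier_mat p q" "diagonal_mat D"
    and V: "V \<in> carrier_mat n q" and a: "a < m" and b: "b < n"
  shows "(U * D * transpose_mat V) $$ (a,b) = (\<Sum>c<min p q. U $$ (a,c) * D $$ (c,c) * V $$ (b,c))"
proof -
  have "(U * D * transpose_mat V) $$ (a,b) = (\<Sum>c<q. (U * D) $$ (a,c) * V $$ (b,c))"
    using index_mult_mat_sum[of "U * D" m q "transpose_mat V" n a b] U D V a b by simp
  also have "\<dots> = (\<Sum>c<q. if c < p then U $$ (a,c) * D $$ (c,c) * V $$ (b,c) else 0)"
    by (rule sum.cong) (auto simp: mult_diagonal_index_if[OF U D a])
  also have "\<dots> = (\<Sum>c<min p q. U $$ (a,c) * D $$ (c,c) * V $$ (b,c))"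
    by (rule sum.mono_neutral_cong_right) auto
  finally show ?thesis .
qed

lemma leading_cols_diag_mult:
  fixes U V :: "'a :: comm_ring_1 mat" and d :: "nat \<Rightarrow> 'a"
  assumes U: "U \<in> carrier_mat m m" and V: "V \<in> carrier_mat n n" and r: "r \<le> m" "r \<le> n"
  shows "leading_cols U r * mat r r (\<lambda>(i,j). if i = j then d i else 0) * transpose_mat (leading_cols V r)
    = U * mat m n (\<lambda>(i,j). if i = j \<and> i < r then d i else 0) * transpose_mat V"
proof (rule eq_matI)
  fix a b assume "a < dim_row (U * mat m n (\<lambda>(i,j). if i = j \<and> i < r then d i else 0) * transpose_mat V)"
    "b < dim_col (U * mat m n (\<lambda>(i,j). if i = j \<and> i < r then d i else 0) * transpose_mat V)"
  then have a: "a < m" and b: "b < n" using U V by auto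
  have Ur: "leading_cols U r \<in> carrier_mat m r" and Vr: "leading_cols V r \<in> carrier_mat n r"
    using U V by auto
  have "(leading_cols U r * mat r r (\<lambda>(i,j). if i = j then d i else 0) * transpose_mat (leading_cols V r)) $$ (a,b)
      = (\<Sum>c<r. U $$ (a,c) * d c * V $$ (b,c))"
    using diagonal_sandwich_index[OF Ur _ _ Vr a b] U V a b by (simp add: diagonal_mat_def)
  also have "\<dots> = (\<Sum>c<min m n. U $$ (a,c) *
      mat m n (\<lambda>(i,j). if i = j \<and> i < r then d i else 0) $$ (c,c) * V $$ (b,c))"
    by (rule sum.mono_neutral_cong_right[symmetric]) (use r in auto)
  also have "\<dots> = (U * mat m n (\<lambda>(i,j). if i = j \<and> i < r then d i else 0) * transpose_mat V) $$ (a,b)"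
    by (rule diagonal_sandwich_index[OF U _ _ V a b, symmetric]) (auto simp: diagonal_mat_def)
  finally show "(leading_cols U r * mat r r (\<lambda>(i,j). if i = j then d i else 0) * transpose_mat (leading_cols V r)) $$ (a,b)
      = (U * mat m n (\<lambda>(i,j). if i = j \<and> i < r then d i else 0) * transpose_mat V) $$ (a,b)" .
qed (use U V in auto)

lemma nonincreasing_nonneg_positive_prefix:
  fixes d :: "nat \<Rightarrow> real"
  assumes dec: "\<And>i j. i \<le> j \<Longrightarrow> j < N \<Longrightarrow> d j \<le> d i"
    and nonneg: "\<And>i. i < N \<Longrightarrow> 0 \<le> d i"
  shows "\<exists>k\<le>N. (\<forall>i<k. 0 < d i) \<and> (\<forall>i. k \<le> i \<longrightarrow> i < N \<longrightarrow> d i = 0)"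
proof -
  define k where "k = (LEAST i. i = N \<or> d i \<le> 0)"
  have "k \<le> N" unfolding k_def by (rule Least_le) simp
  moreover have "0 < d i" if "i < k" for i
    using not_less_Least[of i "\<lambda>i. i = N \<or> d i \<le> 0"] that unfolding k_def[symmetric] by force
  moreover have "d i = 0" if ki: "k \<le> i" and i: "i < N" for i
  proof -
    have "k = N \<or> d k \<le> 0" unfolding k_def by (rule LeastI[of _ N]) simp
    then have "d k \<le> 0" using ki i by auto
    then show ?thesis using dec[OF ki i] nonneg[OF i] by simp
  qed
  ultimately show ?thesis by blast
qed

section \<open>Spectral theorem for real symmetric matrices\<close>

lemma real_symmetric_eigenvalue_real:
  fixes A :: "real mat" and v :: "complex vec"
  assumes A: "A \<in> carrier_mat n n" and sym: "transpose_mat A = A"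
    and v: "v \<in> carrier_vec n" "v \<noteq> 0\<^sub>v n"
    and ev: "map_mat complex_of_real A *\<^sub>v v = a \<cdot>\<^sub>v v"
  shows "cnj a = a"
proof -
  define s where "s = (\<Sum>i<n. cnj (v$i) * (\<Sum>j<n. complex_of_real (A$$(i,j)) * v$j))"
  define N where "N = (\<Sum>i<n. cnj (v$i) * v$i)"
  have row: "(\<Sum>j<n. complex_of_real (A$$(i,j)) * v$j) = a * v$i" if i: "i < n" for i
  proof -
    have "(map_mat complex_of_real A *\<^sub>v v) $ i = (\<Sum>j<n. complex_of_real (A$$(i,j)) * v$j)"
      using i A v(1) by (auto simp: mult_mat_vec_def scalar_prod_def lessThan_atLeast0 intro!: sum.cong)
    then show ?thesis using ev i v(1) by simp
  qed
  have s_eq: "s = a * N"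
    using row unfolding s_def N_def by (simp add: sum_distrib_left algebra_simps)
  have Aij: "A $$ (i,j) = A $$ (j,i)" if "i < n" "j < n" for i j
    using sym A that by (metis carrier_matD index_transpose_mat(1))
  have "cnj s = (\<Sum>i<n. \<Sum>j<n. v$i * complex_of_real (A$$(i,j)) * cnj (v$j))"
    unfolding s_def by (simp add: sum_distrib_left algebra_simps)
  also have "\<dots> = (\<Sum>j<n. \<Sum>i<n. v$i * complex_of_real (A$$(i,j)) * cnj (v$j))"
    by (rule sum.swap)
  also have "\<dots> = s"
    unfolding s_def by (auto simp: sum_distrib_left algebra_simps Aij intro!: sum.cong)
  finally have s_real: "cnj s = s" .
  have N_real: "cnj N = N" unfolding N_def by (simp add: mult.commute)
  have "N \<noteq> 0"
  proof
    assume "N = 0"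
    moreover have "Re N = (\<Sum>i<n. (Re (v$i))\<^sup>2 + (Im (v$i))\<^sup>2)"
      unfolding N_def by (simp add: power2_eq_square sum.distrib)
    ultimately have "(\<Sum>i<n. (Re (v$i))\<^sup>2 + (Im (v$i))\<^sup>2) = 0" by simp
    then have "\<forall>i\<in>{..<n}. (Re (v$i))\<^sup>2 + (Im (v$i))\<^sup>2 = 0"
      by (subst (asm) sum_nonneg_eq_0_iff) auto
    then have "v = 0\<^sub>v n" using v(1) by (intro eq_vecI) (auto simp: complex_eq_iff)
    with v(2) show False by simp
  qed
  from s_eq s_real N_real have "cnj a * N = a * N" by (metis complex_cnj_mult)
  with \<open>N \<noteq> 0\<close> show ?thesis by simp
qed

lemma real_symmetric_char_poly_root:
  fixes A :: "real mat"
  assumes A: "A \<in> carrier_mat n n" and sym: "transpose_mat A = A" and n: "n > 0"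
  shows "\<exists>x. poly (char_poly A) x = 0"
proof -
  define Ac where "Ac = map_mat complex_of_real A"
  have Ac: "Ac \<in> carrier_mat n n" using A unfolding Ac_def by auto
  have cp: "char_poly Ac = map_poly complex_of_real (char_poly A)"
    unfolding Ac_def by (rule of_real_hom.char_poly_hom[OF A])
  obtain as where as: "char_poly Ac = (\<Prod>a\<leftarrow>as. [:- a, 1:])" "length as = n"
    using char_poly_factorized[OF Ac] by blast
  define a where "a = hd as"
  have "a \<in> set as" using as(2) n unfolding a_def by (cases as) auto
  then have root: "poly (char_poly Ac) a = 0" unfolding as(1)
    by (induct as) (auto simp: poly_prod_list)
  then have "eigenvalue Ac a" using eigenvalue_root_char_poly[OF Ac] by simp
  then obtain v where "v \<in> carrier_vec n" "v \<noteq> 0\<^sub>v n" "Ac *\<^sub>v v = a \<cdot>\<^sub>v v"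
    unfolding eigenvalue_def eigenvector_def using Ac by auto
  then have "cnj a = a" using real_symmetric_eigenvalue_real[OF A sym] unfolding Ac_def by blast
  then have "a = complex_of_real (Re a)"
    by (metis Reals_cnj_iff complex_is_Real_iff of_real_Re)
  then have "poly (map_poly complex_of_real (char_poly A)) (complex_of_real (Re a)) = 0"
    using root cp by simp
  then have "poly (char_poly A) (Re a) = 0" by simp
  then show ?thesis by blast
qed

lemma unit_eigenvector_of_root:
  fixes A :: "real mat"
  assumes A: "A \<in> carrier_mat n n" and root: "poly (char_poly A) e = 0"
  shows "\<exists>u. u \<in> carrier_vec n \<and> u \<bullet> u = 1 \<and> A *\<^sub>v u = e \<cdot>\<^sub>v u"
proof -
  have "eigenvalue A e" using root eigenvalue_root_char_poly[OF A] by simp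
  then obtain v where v: "v \<in> carrier_vec n" "v \<noteq> 0\<^sub>v n" "A *\<^sub>v v = e \<cdot>\<^sub>v v"
    unfolding eigenvalue_def eigenvector_def using A by auto
  have "v \<bullet> v > 0" using conjugate_square_greater_0_vec[OF v(1)] v(2) by simp
  moreover have "A *\<^sub>v ((1 / sqrt (v \<bullet> v)) \<cdot>\<^sub>v v) = e \<cdot>\<^sub>v ((1 / sqrt (v \<bullet> v)) \<cdot>\<^sub>v v)"
    using v A by (simp add: mult_mat_vec smult_smult_assoc mult.commute)
  ultimately show ?thesis
    using normalized_sprod_self[OF v(1)] v(1) by (intro exI[of _ "(1 / sqrt (v \<bullet> v)) \<cdot>\<^sub>v v"]) auto
qed

lemma unit_vec_orthogonal_completion:
  fixes u :: "real vec"
  assumes u: "u \<in> carrier_vec n" and u1: "u \<bullet> u = 1"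
  shows "\<exists>W. W \<in> carrier_mat n n \<and> transpose_mat W * W = 1\<^sub>m n \<and> col W 0 = u"
proof -
  have n: "n > 0" using u u1 by (cases n) (auto simp: scalar_prod_def)
  have u0: "u \<noteq> 0\<^sub>v n" using u1 by auto
  interpret cof_vec_space n "TYPE(real)" .
  define b where "b = basis_completion u"
  note bc = basis_completion[OF u u0, folded b_def]
  define ws where "ws = gram_schmidt n b"
  note gs = gram_schmidt_result[OF bc(2) bc(4) bc(5) ws_def]
  have lenws: "length ws = n" using gs(4) bc(6) by simp
  from bc(7) bc(6) n obtain vs where "b = u # vs" by (cases b) auto
  then have "hd ws = u" unfolding ws_def using gram_schmidt_hd[OF u] by simp
  then have ws0: "ws ! 0 = u" using lenws n by (cases ws) auto
  have wsc: "ws ! i \<in> carrier_vec n" if "i < n" for i using gs(3) lenws that by auto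
  have orth: "(ws ! i \<bullet> ws ! j = 0) = (i \<noteq> j)" if "i < n" "j < n" for i j
    using corthogonalD[OF gs(2)] lenws that by simp
  have pos: "ws ! i \<bullet> ws ! i > 0" if "i < n" for i
    using orth[OF that that] sprod_self_nonneg by (metis less_eq_real_def)
  define W where "W = mat_of_cols n (map (\<lambda>w. (1 / sqrt (w \<bullet> w)) \<cdot>\<^sub>v w) ws)"
  have W: "W \<in> carrier_mat n n" unfolding W_def carrier_mat_def using lenws by simp
  have colW: "col W i = (1 / sqrt (ws ! i \<bullet> ws ! i)) \<cdot>\<^sub>v ws ! i" if "i < n" for i
    unfolding W_def using lenws wsc that by (simp add: col_mat_of_cols)
  have "transpose_mat W * W = 1\<^sub>m n"
  proof (rule eq_matI)
    fix i j assume "i < dim_row (1\<^sub>m n)" "j < dim_col (1\<^sub>m n)"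
    then have i: "i < n" and j: "j < n" by auto
    show "(transpose_mat W * W) $$ (i,j) = 1\<^sub>m n $$ (i,j)"
    proof (cases "i = j")
      case True
      then show ?thesis using W i colW normalized_sprod_self[OF wsc[OF i] pos[OF i]] by simp
    next
      case False
      then show ?thesis using W i j orth[OF i j] wsc[OF i] wsc[OF j]
        by (simp add: colW scalar_prod_smult_distrib smult_scalar_prod_distrib)
    qed
  qed (use W in auto)
  moreover have "col W 0 = u" using colW[OF n] ws0 u1 by simp
  ultimately show ?thesis using W by blast
qed

lemma symmetric_deflation:
  fixes A W :: "real mat"
  assumes A: "A \<in> carrier_mat (Suc n) (Suc n)" and sym: "transpose_mat A = A"
    and W: "W \<in> carrier_mat (Suc n) (Suc n)" and WW: "transpose_mat W * W = 1\<^sub>m (Suc n)"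
    and eig: "A *\<^sub>v col W 0 = e \<cdot>\<^sub>v col W 0"
  shows "\<exists>A3. A3 \<in> carrier_mat n n \<and> transpose_mat A3 = A3 \<and>
    transpose_mat W * A * W = four_block_mat (mat 1 1 (\<lambda>_. e)) (0\<^sub>m 1 n) (0\<^sub>m n 1) A3"
proof -
  define A' where "A' = transpose_mat W * A * W"
  define A3 where "A3 = mat n n (\<lambda>(i,j). A' $$ (Suc i, Suc j))"
  have A': "A' \<in> carrier_mat (Suc n) (Suc n)" unfolding A'_def using W A by simp
  have "transpose_mat A' = transpose_mat W * transpose_mat (transpose_mat W * A)"
    unfolding A'_def by (rule transpose_mult) (use W A in auto)
  also have "transpose_mat (transpose_mat W * A) = transpose_mat A * W"
    by (subst transpose_mult[of _ "Suc n" "Suc n"]) (use W A in auto)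
  finally have sym': "transpose_mat A' = A'" unfolding A'_def using sym W A
    by (simp add: assoc_mult_mat[of _ "Suc n" "Suc n" _ "Suc n" _ "Suc n"])
  have col0: "A' $$ (i,0) = (if i = 0 then e else 0)" if i: "i < Suc n" for i
  proof -
    have "A' $$ (i,0) = col W i \<bullet> (A *\<^sub>v col W 0)"
      unfolding A'_def using W A i
      by (simp add: assoc_mult_mat[of _ "Suc n" "Suc n" _ "Suc n" _ "Suc n"] mult_mat_vec_def)
    also have "\<dots> = e * (col W i \<bullet> col W 0)" using W by (simp add: eig scalar_prod_smult_distrib)
    finally show ?thesis using orthogonal_col_sprod[OF W WW i] by simp
  qed
  have row0: "A' $$ (0,j) = (if j = 0 then e else 0)" if j: "j < Suc n" for j
    using col0[OF j] arg_cong[OF sym', of "\<lambda>M. M $$ (j,0)"] A' j by simp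
  have "A' = four_block_mat (mat 1 1 (\<lambda>_. e)) (0\<^sub>m 1 n) (0\<^sub>m n 1) A3"
  proof (rule eq_matI)
    fix i j assume "i < dim_row (four_block_mat (mat 1 1 (\<lambda>_. e)) (0\<^sub>m 1 n) (0\<^sub>m n 1) A3)"
      "j < dim_col (four_block_mat (mat 1 1 (\<lambda>_. e)) (0\<^sub>m 1 n) (0\<^sub>m n 1) A3)"
    then have i: "i < Suc n" and j: "j < Suc n" unfolding A3_def by auto
    show "A' $$ (i,j) = four_block_mat (mat 1 1 (\<lambda>_. e)) (0\<^sub>m 1 n) (0\<^sub>m n 1) A3 $$ (i,j)"
    proof (cases "i = 0 \<or> j = 0")
      case True
      then show ?thesis using col0 row0 i j unfolding A3_def by auto
    next
      case False
      then obtain i' j' where "i = Suc i'" "j = Suc j'" by (metis not0_implies_Suc)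
      then show ?thesis using i j unfolding A3_def by simp
    qed
  qed (use A' in \<open>auto simp: A3_def\<close>)
  moreover have "transpose_mat A3 = A3"
  proof (rule eq_matI)
    fix i j assume "i < dim_row A3" "j < dim_col A3"
    then have ij: "i < n" "j < n" by (auto simp: A3_def)
    then have "A' $$ (Suc j, Suc i) = transpose_mat A' $$ (Suc i, Suc j)" using A' by simp
    then show "transpose_mat A3 $$ (i,j) = A3 $$ (i,j)" using ij sym' by (simp add: A3_def)
  qed (auto simp: A3_def)
  moreover have "A3 \<in> carrier_mat n n" unfolding A3_def by simp
  ultimately show ?thesis unfolding A'_def by blast
qed

lemma block_diag_extend_conj:
  fixes V D :: "real mat" and e :: real
  assumes V: "V \<in> carrier_mat n n" and D: "D \<in> carrier_mat n n"
  defines "B \<equiv> four_block_mat (1\<^sub>m 1) (0\<^sub>m 1 n) (0\<^sub>m n 1) V"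
  shows "B * four_block_mat (mat 1 1 (\<lambda>_. e)) (0\<^sub>m 1 n) (0\<^sub>m n 1) D * transpose_mat B
      = four_block_mat (mat 1 1 (\<lambda>_. e)) (0\<^sub>m 1 n) (0\<^sub>m n 1) (V * D * transpose_mat V)"
    and "transpose_mat V * V = 1\<^sub>m n \<Longrightarrow> transpose_mat B * B = 1\<^sub>m (Suc n)"
proof -
  have BT: "transpose_mat B = four_block_mat (1\<^sub>m 1) (0\<^sub>m 1 n) (0\<^sub>m n 1) (transpose_mat V)"
    unfolding B_def by (subst transpose_four_block_mat) (use V in auto)
  show "B * four_block_mat (mat 1 1 (\<lambda>_. e)) (0\<^sub>m 1 n) (0\<^sub>m n 1) D * transpose_mat B
      = four_block_mat (mat 1 1 (\<lambda>_. e)) (0\<^sub>m 1 n) (0\<^sub>m n 1) (V * D * transpose_mat V)"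
    unfolding BT unfolding B_def using V D
    by (simp add: mult_four_block_mat[of _ 1 1 _ n _ n _ _ 1 _ n])
  show "transpose_mat B * B = 1\<^sub>m (Suc n)" if "transpose_mat V * V = 1\<^sub>m n"
    unfolding BT unfolding B_def using V that
    by (simp add: mult_four_block_mat[of _ 1 1 _ n _ n _ _ 1 _ n])
qed

text \<open>Deflating by the largest eigenvalue is what keeps the diagonal of the spectral
  decomposition sorted.\<close>

lemma symmetric_top_eigenvalue_deflation:
  fixes A :: "real mat"
  assumes A: "A \<in> carrier_mat (Suc n) (Suc n)" and sym: "transpose_mat A = A"
  obtains W A3 e where "W \<in> carrier_mat (Suc n) (Suc n)" "transpose_mat W * W = 1\<^sub>m (Suc n)"
    "A3 \<in> carrier_mat n n" "transpose_mat A3 = A3"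
    "transpose_mat W * A * W = four_block_mat (mat 1 1 (\<lambda>_. e)) (0\<^sub>m 1 n) (0\<^sub>m n 1) A3"
    "poly (char_poly A) e = 0" "\<And>x. poly (char_poly A) x = 0 \<Longrightarrow> x \<le> e"
    "\<And>x. poly (char_poly A3) x = 0 \<Longrightarrow> poly (char_poly A) x = 0"
proof -
  define R where "R = {x. poly (char_poly A) x = 0}"
  have "char_poly A \<noteq> 0" using degree_monic_char_poly[OF A] by auto
  then have finR: "finite R" unfolding R_def using poly_roots_finite by blast
  have "R \<noteq> {}" unfolding R_def using real_symmetric_char_poly_root[OF A sym] by auto
  define e where "e = Max R"
  have eR: "e \<in> R" and emax: "\<And>x. x \<in> R \<Longrightarrow> x \<le> e"
    unfolding e_def using finR \<open>R \<noteq> {}\<close> by auto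
  obtain u where u: "u \<in> carrier_vec (Suc n)" "u \<bullet> u = 1" and Au: "A *\<^sub>v u = e \<cdot>\<^sub>v u"
    using unit_eigenvector_of_root[OF A] eR unfolding R_def by blast
  obtain W where W: "W \<in> carrier_mat (Suc n) (Suc n)" and WW: "transpose_mat W * W = 1\<^sub>m (Suc n)"
    and "col W 0 = u" using unit_vec_orthogonal_completion[OF u] by blast
  then obtain A3 where A3: "A3 \<in> carrier_mat n n" "transpose_mat A3 = A3"
    and WAW: "transpose_mat W * A * W = four_block_mat (mat 1 1 (\<lambda>_. e)) (0\<^sub>m 1 n) (0\<^sub>m n 1) A3"
    using symmetric_deflation[OF A sym W WW] Au by blast
  have WW': "W * transpose_mat W = 1\<^sub>m (Suc n)" using orthogonal_mat_right_inverse[OF W WW] .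
  have "similar_mat A (transpose_mat W * A * W)"
    unfolding similar_mat_def similar_mat_wit_def using A W WW WW' orthogonal_conj_cancel[OF W A WW']
    by (intro exI[of _ W] exI[of _ "transpose_mat W"]) auto
  then have "char_poly A = char_poly (transpose_mat W * A * W)" by (rule char_poly_similar)
  also have "\<dots> = char_poly (mat 1 1 (\<lambda>_. e)) * char_poly A3"
    unfolding WAW by (rule char_poly_four_block_zeros_col) (use A3 in auto)
  finally have roots3: "poly (char_poly A3) x = 0 \<Longrightarrow> poly (char_poly A) x = 0" for x by simp
  show ?thesis by (rule that[OF W WW A3 WAW _ _ roots3]) (use eR emax in \<open>auto simp: R_def\<close>)
qed

lemma orthogonal_block_diag_extend:
  fixes A W V3 D3 :: "real mat" and e :: real
  assumes A: "A \<in> carrier_mat (Suc n) (Suc n)"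
    and W: "W \<in> carrier_mat (Suc n) (Suc n)" "transpose_mat W * W = 1\<^sub>m (Suc n)"
    and V3: "V3 \<in> carrier_mat n n" "transpose_mat V3 * V3 = 1\<^sub>m n" and D3: "D3 \<in> carrier_mat n n"
    and WAW: "transpose_mat W * A * W
      = four_block_mat (mat 1 1 (\<lambda>_. e)) (0\<^sub>m 1 n) (0\<^sub>m n 1) (V3 * D3 * transpose_mat V3)"
  obtains V where "V \<in> carrier_mat (Suc n) (Suc n)" "transpose_mat V * V = 1\<^sub>m (Suc n)"
    "A = V * four_block_mat (mat 1 1 (\<lambda>_. e)) (0\<^sub>m 1 n) (0\<^sub>m n 1) D3 * transpose_mat V"
proof -
  define B where "B = four_block_mat (1\<^sub>m 1) (0\<^sub>m 1 n) (0\<^sub>m n 1) V3"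
  define D where "D = four_block_mat (mat 1 1 (\<lambda>_. e)) (0\<^sub>m 1 n) (0\<^sub>m n 1) D3"
  have B: "B \<in> carrier_mat (Suc n) (Suc n)"
    unfolding B_def using four_block_carrier_mat[OF one_carrier_mat V3(1), of 1] by simp
  have D: "D \<in> carrier_mat (Suc n) (Suc n)"
    unfolding D_def using four_block_carrier_mat[OF _ D3, of "mat 1 1 (\<lambda>_. e)" 1 1] by simp
  note BDB = block_diag_extend_conj(1)[OF V3(1) D3, where e = e, folded B_def D_def]
  note BB = block_diag_extend_conj(2)[OF V3(1) D3 V3(2), folded B_def]
  have "transpose_mat (W * B) * (W * B) = transpose_mat B * (transpose_mat W * W) * B"
    using W(1) B by (simp add: transpose_mult assoc_mult_mat[of _ "Suc n" "Suc n" _ "Suc n" _ "Suc n"])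
  then have orth: "transpose_mat (W * B) * (W * B) = 1\<^sub>m (Suc n)" using W BB B by simp
  have "(W * B) * D * transpose_mat (W * B) = W * (B * D * transpose_mat B) * transpose_mat W"
    using W(1) B D by (simp add: transpose_mult assoc_mult_mat[of _ "Suc n" "Suc n" _ "Suc n" _ "Suc n"])
  then have "A = (W * B) * D * transpose_mat (W * B)"
    using BDB WAW orthogonal_conj_cancel[OF W(1) A orthogonal_mat_right_inverse[OF W]] by simp
  moreover have "W * B \<in> carrier_mat (Suc n) (Suc n)" using W B by simp
  ultimately show ?thesis using orth that unfolding D_def by blast
qed

theorem real_symmetric_spectral_decomposition:
  fixes A :: "real mat"
  assumes "A \<in> carrier_mat n n" "transpose_mat A = A"
  shows "\<exists>V D. V \<in> carrier_mat n n \<and> D \<in> carrier_mat n n \<and> transpose_mat V * V = 1\<^sub>m n \<and>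
    diagonal_mat D \<and> (\<forall>i j. i \<le> j \<and> j < n \<longrightarrow> D $$ (j,j) \<le> D $$ (i,i)) \<and>
    (\<forall>i<n. poly (char_poly A) (D $$ (i,i)) = 0) \<and> A = V * D * transpose_mat V"
  using assms
proof (induction n arbitrary: A)
  case 0
  then show ?case
    by (intro exI[of _ "1\<^sub>m 0"] exI[of _ "0\<^sub>m 0 0"]) (auto simp: diagonal_mat_def intro!: eq_matI)
next
  case (Suc n A)
  obtain W A3 e where W: "W \<in> carrier_mat (Suc n) (Suc n)" "transpose_mat W * W = 1\<^sub>m (Suc n)"
    and A3: "A3 \<in> carrier_mat n n" "transpose_mat A3 = A3"
    and WAW: "transpose_mat W * A * W = four_block_mat (mat 1 1 (\<lambda>_. e)) (0\<^sub>m 1 n) (0\<^sub>m n 1) A3"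
    and root: "poly (char_poly A) e = 0" and top: "\<And>x. poly (char_poly A) x = 0 \<Longrightarrow> x \<le> e"
    and roots3: "\<And>x. poly (char_poly A3) x = 0 \<Longrightarrow> poly (char_poly A) x = 0"
    using symmetric_top_eigenvalue_deflation[OF Suc.prems] by blast
  obtain V3 D3 where V3: "V3 \<in> carrier_mat n n" "transpose_mat V3 * V3 = 1\<^sub>m n"
    and D3: "D3 \<in> carrier_mat n n" "diagonal_mat D3"
    and sorted3: "\<forall>i j. i \<le> j \<and> j < n \<longrightarrow> D3 $$ (j,j) \<le> D3 $$ (i,i)"
    and eigen3: "\<forall>i<n. poly (char_poly A3) (D3 $$ (i,i)) = 0"
    and A3eq: "A3 = V3 * D3 * transpose_mat V3"
    using Suc.IH[OF A3] by blast
  define D where "D = four_block_mat (mat 1 1 (\<lambda>_. e)) (0\<^sub>m 1 n) (0\<^sub>m n 1) D3"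
  have Dii: "D $$ (i,i) = (if i = 0 then e else D3 $$ (i - 1, i - 1))" if "i < Suc n" for i
    unfolding D_def using D3 that by auto
  obtain V where "V \<in> carrier_mat (Suc n) (Suc n)" "transpose_mat V * V = 1\<^sub>m (Suc n)"
    "A = V * D * transpose_mat V"
    using orthogonal_block_diag_extend[OF Suc.prems(1) W V3 D3(1) WAW[unfolded A3eq]] unfolding D_def by blast
  moreover have "D \<in> carrier_mat (Suc n) (Suc n)" "diagonal_mat D"
    unfolding D_def using D3 by (auto simp: diagonal_mat_def)
  moreover have eigen: "\<forall>i<Suc n. poly (char_poly A) (D $$ (i,i)) = 0"
    using Dii root eigen3 roots3 by (auto simp: less_Suc_eq_0_disj)
  moreover have "\<forall>i j. i \<le> j \<and> j < Suc n \<longrightarrow> D $$ (j,j) \<le> D $$ (i,i)"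
  proof (intro allI impI)
    fix i j assume ij: "i \<le> j \<and> j < Suc n"
    show "D $$ (j,j) \<le> D $$ (i,i)"
    proof (cases i)
      case 0
      then show ?thesis using top eigen Dii ij by auto
    next
      case (Suc i')
      then obtain j' where "j = Suc j'" using ij by (cases j) auto
      then show ?thesis using Suc Dii ij sorted3 by auto
    qed
  qed
  ultimately show ?case by blast
qed

section \<open>Orthonormal completion and existence of the SVD\<close>

lemma idempotent_diagonal_entry:
  fixes E :: "real mat"
  assumes E: "E \<in> carrier_mat n n" "diagonal_mat E" and EE: "E * E = E" and i: "i < n"
  shows "E $$ (i,i) = 0 \<or> E $$ (i,i) = 1"
proof -
  have "E $$ (i,i) * E $$ (i,i) = E $$ (i,i)"
    using diagonal_mult_index[OF E E(1) i i i] EE by simp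
  then show ?thesis by (metis mult_cancel_right1 mult_eq_0_iff)
qed

lemma symmetric_idempotent_eigenbasis:
  fixes P :: "real mat"
  assumes P: "P \<in> carrier_mat n n" and sym: "transpose_mat P = P" and PP: "P * P = P"
  shows "\<exists>W t. W \<in> carrier_mat n n \<and> transpose_mat W * W = 1\<^sub>m n \<and> t \<le> n \<and>
    real t = trace P \<and> P * leading_cols W t = leading_cols W t"
proof -
  obtain W E where W: "W \<in> carrier_mat n n" "transpose_mat W * W = 1\<^sub>m n"
    and E: "E \<in> carrier_mat n n" "diagonal_mat E"
    and sorted: "\<forall>i j. i \<le> j \<and> j < n \<longrightarrow> E $$ (j,j) \<le> E $$ (i,i)"
    and PWEW: "P = W * E * transpose_mat W"
    using real_symmetric_spectral_decomposition[OF P sym] by blast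
  have WW': "W * transpose_mat W = 1\<^sub>m n" using orthogonal_mat_right_inverse[OF W] .
  have PW: "P * W = W * E"
    unfolding PWEW using W E by (simp add: assoc_mult_mat[of _ n n _ n _ n])
  have WT: "transpose_mat W \<in> carrier_mat n n" "transpose_mat W * transpose_mat (transpose_mat W) = 1\<^sub>m n"
    using W by auto
  have E_conj: "E = transpose_mat W * P * W"
    using orthogonal_conj_cancel[OF WT(1) E(1) WT(2)] unfolding PWEW by simp
  have EE: "E * E = E"
    unfolding E_conj orthogonal_conj_mult[OF W(1) WW' P P] PP ..
  have E01: "E $$ (i,i) = 0 \<or> E $$ (i,i) = 1" if "i < n" for i
    using idempotent_diagonal_entry[OF E EE that] .
  have "0 \<le> E $$ (i,i)" if "i < n" for i using E01[OF that] by auto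
  then obtain t where t: "t \<le> n" and ones: "\<forall>i<t. 0 < E $$ (i,i)"
    and zeros: "\<forall>i. t \<le> i \<longrightarrow> i < n \<longrightarrow> E $$ (i,i) = 0"
    using nonincreasing_nonneg_positive_prefix[of n "\<lambda>i. E $$ (i,i)"] sorted by blast
  have one: "E $$ (i,i) = 1" if "i < t" for i using ones E01[of i] t that by auto
  have "trace P = trace E" unfolding PWEW by (rule trace_orthogonal_conj[OF W E(1)])
  also have "\<dots> = (\<Sum>i<n. E $$ (i,i))" unfolding trace_def using E by simp
  also have "\<dots> = (\<Sum>i<t. E $$ (i,i))"
    by (rule sum.mono_neutral_right) (use t zeros in auto)
  also have "\<dots> = (\<Sum>i<t. 1)" using one by simp
  also have "\<dots> = real t" by simp
  finally have trP: "real t = trace P" ..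
  have "P * leading_cols W t = leading_cols W t"
  proof (rule eq_matI)
    fix a i assume "a < dim_row (leading_cols W t)" "i < dim_col (leading_cols W t)"
    then have a: "a < n" and i: "i < t" using W by auto
    have "(P * leading_cols W t) $$ (a,i) = (P * W) $$ (a,i)"
      using P W a i t by (simp add: col_leading_cols)
    also have "\<dots> = W $$ (a,i) * E $$ (i,i)"
      unfolding PW using mult_diagonal_index[OF W(1) E] a i t by simp
    also have "\<dots> = W $$ (a,i)" using one[OF i] by simp
    finally show "(P * leading_cols W t) $$ (a,i) = leading_cols W t $$ (a,i)"
      using W a i by (simp add: leading_cols_def)
  qed (use P W in auto)
  then show ?thesis using W t trP by blast
qed

text \<open>The complement is spanned by the eigenvectors of the projection \<open>1 - U\<^sub>k U\<^sub>k\<^sup>T\<close> for the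
  eigenvalue 1; their number is its trace \<open>n - k\<close>.\<close>

lemma orthonormal_complement:
  fixes Uk :: "real mat"
  assumes Uk: "Uk \<in> carrier_mat n k" and UU: "transpose_mat Uk * Uk = 1\<^sub>m k"
  shows "\<exists>W t. W \<in> carrier_mat n t \<and> transpose_mat W * W = 1\<^sub>m t \<and>
    transpose_mat Uk * W = 0\<^sub>m k t \<and> k + t = n"
proof -
  have UkT: "transpose_mat Uk \<in> carrier_mat k n" using Uk by simp
  define Q where "Q = Uk * transpose_mat Uk"
  define P where "P = 1\<^sub>m n - Q"
  have Q: "Q \<in> carrier_mat n n" unfolding Q_def using Uk by simp
  have P: "P \<in> carrier_mat n n" unfolding P_def using Q by (simp add: minus_carrier_mat)
  have UkQ: "transpose_mat Uk * Q = transpose_mat Uk"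
    unfolding Q_def using Uk UU by (simp add: assoc_mult_mat[of _ k n _ k _ n, symmetric])
  have "transpose_mat Uk * P = transpose_mat Uk * 1\<^sub>m n - transpose_mat Uk * Q"
    unfolding P_def by (rule mult_minus_distrib_mat[OF UkT]) (use Q in auto)
  then have UkP: "transpose_mat Uk * P = 0\<^sub>m k n"
    unfolding UkQ using UkT by (intro eq_matI) auto
  have "Q * P = Uk * (transpose_mat Uk * P)"
    unfolding Q_def using Uk UkT P by (simp add: assoc_mult_mat[of _ n k _ n _ n])
  then have QP: "Q * P = 0\<^sub>m n n" unfolding UkP using Uk by simp
  have "P * P = 1\<^sub>m n * P - Q * P"
    unfolding P_def by (rule minus_mult_distrib_mat) (use Q P in auto)
  then have PP: "P * P = P" unfolding QP using P by (intro eq_matI) auto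
  have "transpose_mat Q = Q" unfolding Q_def using transpose_mult[OF Uk UkT] by simp
  then have symP: "transpose_mat P = P"
    unfolding P_def by (subst transpose_minus[of _ n n]) (use Q in auto)
  have trP: "trace P = real n - real k"
    unfolding P_def using trace_minus[OF one_carrier_mat Q] trace_mult_comm[OF Uk UkT] UU
    by (simp add: Q_def)
  obtain W t where W: "W \<in> carrier_mat n n" "transpose_mat W * W = 1\<^sub>m n" and t: "t \<le> n"
    and t_tr: "real t = trace P" and PW: "P * leading_cols W t = leading_cols W t"
    using symmetric_idempotent_eigenbasis[OF P symP PP] by blast
  have "transpose_mat Uk * leading_cols W t = (transpose_mat Uk * P) * leading_cols W t"
    using UkT P W by (simp add: PW assoc_mult_mat[of _ k n _ n _ t])
  then have "transpose_mat Uk * leading_cols W t = 0\<^sub>m k t" using UkP W by simp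
  moreover have "k + t = n" using t_tr trP by linarith
  ultimately show ?thesis
    using leading_cols_orthonormal[OF W t] W(1) by (intro exI[of _ "leading_cols W t"]) auto
qed

lemma orthonormal_cols_append:
  fixes Uk W :: "real mat"
  assumes Uk: "Uk \<in> carrier_mat n k" "transpose_mat Uk * Uk = 1\<^sub>m k"
    and W: "W \<in> carrier_mat n t" "transpose_mat W * W = 1\<^sub>m t"
    and UkW: "transpose_mat Uk * W = 0\<^sub>m k t" and n: "k + t = n"
  defines "vs \<equiv> map (col Uk) [0..<k] @ map (col W) [0..<t]"
  defines "U \<equiv> mat_of_cols n vs"
  shows "U \<in> carrier_mat n n" "transpose_mat U * U = 1\<^sub>m n" "leading_cols U k = Uk"
proof -
  have len: "length vs = n" unfolding vs_def using n by simp
  show U: "U \<in> carrier_mat n n" unfolding U_def carrier_mat_def using len by simp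
  have colU: "col U i = (if i < k then col Uk i else col W (i - k))" if i: "i < n" for i
  proof -
    have vs_i: "vs ! i = (if i < k then col Uk i else col W (i - k))"
      unfolding vs_def using i n by (simp add: nth_append)
    moreover have "vs ! i \<in> carrier_vec n" unfolding vs_i using Uk(1) W(1) by auto
    ultimately show ?thesis unfolding U_def using col_mat_of_cols[of i vs n] i len by simp
  qed
  have cross: "col Uk a \<bullet> col W b = 0" if "a < k" "b < t" for a b
  proof -
    have "col Uk a \<bullet> col W b = (transpose_mat Uk * W) $$ (a,b)" using Uk(1) W(1) that by simp
    then show ?thesis unfolding UkW using that by simp
  qed
  show "transpose_mat U * U = 1\<^sub>m n"
  proof (rule eq_matI)
    fix i j assume "i < dim_row (1\<^sub>m n)" "j < dim_col (1\<^sub>m n)"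
    then have i: "i < n" and j: "j < n" by auto
    have "(transpose_mat U * U) $$ (i,j) = col U i \<bullet> col U j" using U i j by simp
    also have "\<dots> = 1\<^sub>m n $$ (i,j)"
    proof (cases "i < k"; cases "j < k")
      assume "i < k" "j < k"
      then show ?thesis using orthogonal_col_sprod[OF Uk] colU i j by simp
    next
      assume "i < k" "\<not> j < k"
      then show ?thesis using cross[of i "j - k"] colU i j n by simp
    next
      assume "\<not> i < k" "j < k"
      moreover have "col W (i - k) \<bullet> col Uk j = col Uk j \<bullet> col W (i - k)"
        using Uk(1) W(1) by (intro comm_scalar_prod[of _ n]) auto
      ultimately show ?thesis using cross[of j "i - k"] colU i j n by simp
    next
      assume "\<not> i < k" "\<not> j < k"
      then show ?thesis using orthogonal_col_sprod[OF W, of "i - k" "j - k"] colU i j n by auto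
    qed
    finally show "(transpose_mat U * U) $$ (i,j) = 1\<^sub>m n $$ (i,j)" .
  qed (use U in auto)
  show "leading_cols U k = Uk"
  proof (rule eq_matI)
    fix a j assume "a < dim_row Uk" "j < dim_col Uk"
    then have a: "a < n" and j: "j < k" using Uk(1) by auto
    have "U $$ (a,j) = col U j $ a" using U a j n by simp
    then show "leading_cols U k $$ (a,j) = Uk $$ (a,j)" using colU[of j] Uk(1) U a j n by simp
  qed (use U Uk(1) in auto)
qed

theorem orthonormal_cols_completion:
  fixes Uk :: "real mat"
  assumes "Uk \<in> carrier_mat n k" "transpose_mat Uk * Uk = 1\<^sub>m k"
  shows "\<exists>U. U \<in> carrier_mat n n \<and> transpose_mat U * U = 1\<^sub>m n \<and> leading_cols U k = Uk \<and> k \<le> n"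
proof -
  obtain W t where "W \<in> carrier_mat n t" "transpose_mat W * W = 1\<^sub>m t"
    "transpose_mat Uk * W = 0\<^sub>m k t" "k + t = n"
    using orthonormal_complement[OF assms] by blast
  from orthonormal_cols_append[OF assms this] \<open>k + t = n\<close> show ?thesis by (meson le_add1)
qed

lemma normalized_orthogonal_cols:
  fixes Y :: "real mat"
  assumes Y: "Y \<in> carrier_mat m n" and D: "diagonal_mat (transpose_mat Y * Y)"
    and k: "k \<le> n" and pos: "\<And>i. i < k \<Longrightarrow> 0 < col Y i \<bullet> col Y i"
  defines "Uk \<equiv> mat_of_cols m (map (\<lambda>i. (1 / sqrt (col Y i \<bullet> col Y i)) \<cdot>\<^sub>v col Y i) [0..<k])"
  shows "Uk \<in> carrier_mat m k" "transpose_mat Uk * Uk = 1\<^sub>m k"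
    and "j < k \<Longrightarrow> col Uk j = (1 / sqrt (col Y j \<bullet> col Y j)) \<cdot>\<^sub>v col Y j"
proof -
  show Uk: "Uk \<in> carrier_mat m k" unfolding Uk_def carrier_mat_def by simp
  have colUk: "col Uk i = (1 / sqrt (col Y i \<bullet> col Y i)) \<cdot>\<^sub>v col Y i" if i: "i < k" for i
    unfolding Uk_def using i Y by (subst col_mat_of_cols) auto
  then show "j < k \<Longrightarrow> col Uk j = (1 / sqrt (col Y j \<bullet> col Y j)) \<cdot>\<^sub>v col Y j" .
  have orth: "col Y i \<bullet> col Y j = 0" if "i < n" "j < n" "i \<noteq> j" for i j
    using D Y that unfolding diagonal_mat_def by auto
  show "transpose_mat Uk * Uk = 1\<^sub>m k"
  proof (rule eq_matI)
    fix i j assume "i < dim_row (1\<^sub>m k)" "j < dim_col (1\<^sub>m k)"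
    then have i: "i < k" and j: "j < k" by auto
    have "(transpose_mat Uk * Uk) $$ (i,j) = col Uk i \<bullet> col Uk j" using Uk i j by simp
    also have "\<dots> = 1\<^sub>m k $$ (i,j)"
    proof (cases "i = j")
      case True
      then show ?thesis using colUk[OF i] normalized_sprod_self[OF col_dim pos[OF i]] i by simp
    next
      case False
      then show ?thesis using colUk i j k Y orth[of i j]
        by (simp add: scalar_prod_smult_distrib smult_scalar_prod_distrib)
    qed
    finally show "(transpose_mat Uk * Uk) $$ (i,j) = 1\<^sub>m k $$ (i,j)" .
  qed (use Uk in auto)
qed

lemma orthogonal_cols_factorization:
  fixes Y :: "real mat"
  assumes Y: "Y \<in> carrier_mat m n" and D: "diagonal_mat (transpose_mat Y * Y)"
    and sorted: "\<And>i j. i \<le> j \<Longrightarrow> j < n \<Longrightarrow> col Y j \<bullet> col Y j \<le> col Y i \<bullet> col Y i"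
  shows "\<exists>U. U \<in> carrier_mat m m \<and> transpose_mat U * U = 1\<^sub>m m \<and>
    Y = U * mat m n (\<lambda>(i,j). if i = j then sqrt (col Y i \<bullet> col Y i) else 0)"
proof -
  define S where "S = mat m n (\<lambda>(i,j). if i = j then sqrt (col Y i \<bullet> col Y i) else 0)"
  have "\<exists>k\<le>n. (\<forall>i<k. 0 < col Y i \<bullet> col Y i) \<and> (\<forall>i. k \<le> i \<longrightarrow> i < n \<longrightarrow> col Y i \<bullet> col Y i = 0)"
    by (rule nonincreasing_nonneg_positive_prefix) (use sorted sprod_self_nonneg in auto)
  then obtain k where k: "k \<le> n" and pos: "\<forall>i<k. 0 < col Y i \<bullet> col Y i"
    and zero: "\<forall>i. k \<le> i \<longrightarrow> i < n \<longrightarrow> col Y i \<bullet> col Y i = 0"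
    by blast
  have Y0: "Y $$ (a,i) = 0" if ki: "k \<le> i" "i < n" and a: "a < m" for a i
  proof -
    have "col Y i \<bullet> col Y i = 0" using zero ki by simp
    then have "col Y i = 0\<^sub>v m" using conjugate_square_eq_0_vec[of "col Y i" m] col_dim[of Y i] Y by simp
    then have "col Y i $ a = 0" using a by simp
    then show ?thesis using Y a ki by simp
  qed
  define Uk where "Uk = mat_of_cols m (map (\<lambda>i. (1 / sqrt (col Y i \<bullet> col Y i)) \<cdot>\<^sub>v col Y i) [0..<k])"
  note Uk = normalized_orthogonal_cols[OF Y D k pos[rule_format], folded Uk_def]
  obtain U where U: "U \<in> carrier_mat m m" "transpose_mat U * U = 1\<^sub>m m"
    and lead: "leading_cols U k = Uk" and km: "k \<le> m"
    using orthonormal_cols_completion[OF Uk(1,2)] by blast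
  have S: "S \<in> carrier_mat m n" "diagonal_mat S" by (auto simp: S_def diagonal_mat_def)
  have "Y = U * S"
  proof (rule eq_matI)
    fix a i assume "a < dim_row (U * S)" "i < dim_col (U * S)"
    then have a: "a < m" and i: "i < n" using U S by auto
    show "Y $$ (a,i) = (U * S) $$ (a,i)"
    proof (cases "i < k")
      case True
      have "U $$ (a,i) = leading_cols U k $$ (a,i)" using U a True by simp
      also have "\<dots> = col Uk i $ a" unfolding lead using Uk(1) a True by simp
      also have "\<dots> = (1 / sqrt (col Y i \<bullet> col Y i)) * Y $$ (a,i)"
        using Uk(3)[of i] True a Y i by simp
      finally have Uai: "U $$ (a,i) = (1 / sqrt (col Y i \<bullet> col Y i)) * Y $$ (a,i)" .
      have "0 < sqrt (col Y i \<bullet> col Y i)" using pos True by simp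
      then have "Y $$ (a,i) = U $$ (a,i) * S $$ (i,i)"
        unfolding Uai using i True km by (simp add: S_def)
      also have "\<dots> = (U * S) $$ (a,i)"
        using mult_diagonal_index[OF U(1) S a] i True km by simp
      finally show ?thesis .
    next
      case False
      have "(U * S) $$ (a,i) = (\<Sum>c<m. U $$ (a,c) * S $$ (c,i))"
        by (rule index_mult_mat_sum[OF U(1) S(1) a i])
      also have "\<dots> = 0" using zero False i by (intro sum.neutral) (auto simp: S_def)
      finally show ?thesis using Y0 False i a by simp
    qed
  qed (use Y U in \<open>auto simp: S_def\<close>)
  then show ?thesis using U unfolding S_def by blast
qed

theorem svd_exists:
  fixes A :: "real mat"
  assumes A: "A \<in> carrier_mat m n"
  shows "\<exists>U S V. is_svd A U S V"
proof -
  have AtA: "transpose_mat A * A \<in> carrier_mat n n" using A by simp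
  have sym: "transpose_mat (transpose_mat A * A) = transpose_mat A * A"
    using transpose_mult[of "transpose_mat A" n m A n] A by simp
  obtain V D where V: "V \<in> carrier_mat n n" "transpose_mat V * V = 1\<^sub>m n"
    and D: "D \<in> carrier_mat n n" "diagonal_mat D"
    and sorted: "\<forall>i j. i \<le> j \<and> j < n \<longrightarrow> D $$ (j,j) \<le> D $$ (i,i)"
    and AtA_eq: "transpose_mat A * A = V * D * transpose_mat V"
    using real_symmetric_spectral_decomposition[OF AtA sym] by (elim exE conjE) (rule that; assumption)
  define Y where "Y = A * V"
  have Y: "Y \<in> carrier_mat m n" unfolding Y_def using A V by simp
  have "transpose_mat Y * Y = transpose_mat V * (transpose_mat A * A) * V"
    unfolding Y_def using A V
    by (simp add: transpose_mult[OF A V(1)] assoc_mult_mat[of _ n m _ m _ n] assoc_mult_mat[of _ n n _ m _ n]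
        assoc_mult_mat[of _ n n _ n _ n] assoc_mult_mat[of _ n m _ n _ n])
  also have "\<dots> = D"
    unfolding AtA_eq using orthogonal_conj_cancel[of "transpose_mat V" n D] V D by simp
  finally have YY: "transpose_mat Y * Y = D" .
  have colY: "col Y i \<bullet> col Y j = D $$ (i,j)" if "i < n" "j < n" for i j
    using arg_cong[OF YY, of "\<lambda>M. M $$ (i,j)"] Y that by simp
  obtain U where U: "U \<in> carrier_mat m m" "transpose_mat U * U = 1\<^sub>m m"
    and Y_eq: "Y = U * mat m n (\<lambda>(i,j). if i = j then sqrt (col Y i \<bullet> col Y i) else 0)"
  proof -
    have "diagonal_mat (transpose_mat Y * Y)" using YY D by simp
    moreover have "col Y j \<bullet> col Y j \<le> col Y i \<bullet> col Y i" if "i \<le> j" "j < n" for i j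
      using sorted colY that by simp
    ultimately show ?thesis using orthogonal_cols_factorization[OF Y] that by blast
  qed
  define S where "S = mat m n (\<lambda>(i,j). if i = j then sqrt (col Y i \<bullet> col Y i) else 0)"
  have YS: "Y = U * S" using Y_eq unfolding S_def .
  have "A = Y * transpose_mat V"
    unfolding Y_def using A V orthogonal_mat_right_inverse[OF V]
    by (simp add: assoc_mult_mat[of _ m n _ n _ n])
  then have "A = U * S * transpose_mat V" unfolding YS .
  moreover have "\<forall>i j. i \<le> j \<and> j < min m n \<longrightarrow> S $$ (j,j) \<le> S $$ (i,i)"
    using sorted colY by (simp add: S_def)
  moreover have "S \<in> carrier_mat m n" "\<forall>i<m. \<forall>j<n. i \<noteq> j \<longrightarrow> S $$ (i,j) = 0"
    "\<forall>i<min m n. 0 \<le> S $$ (i,i)"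
    by (auto simp: S_def sprod_self_nonneg)
  ultimately have "is_svd A U S V"
    unfolding is_svd_def Let_def using A U V by simp
  then show ?thesis by blast
qed

lemma is_svdD:
  assumes "is_svd X U S V" and "X \<in> carrier_mat m n"
  shows "U \<in> carrier_mat m m" "S \<in> carrier_mat m n" "V \<in> carrier_mat n n"
    "transpose_mat U * U = 1\<^sub>m m" "transpose_mat V * V = 1\<^sub>m n" "diagonal_mat S"
    "\<And>i. i < min m n \<Longrightarrow> 0 \<le> S $$ (i,i)"
    "\<And>i j. i \<le> j \<Longrightarrow> j < min m n \<Longrightarrow> S $$ (j,j) \<le> S $$ (i,i)"
    "X = U * S * transpose_mat V"
  using assms unfolding is_svd_def Let_def diagonal_mat_def by auto

section \<open>The nuclear norm\<close>

lemma orthogonal_mat_vec_sprod_self: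
  fixes W :: "real mat" and x :: "real vec"
  assumes W: "W \<in> carrier_mat n n" "transpose_mat W * W = 1\<^sub>m n" and x: "x \<in> carrier_vec n"
  shows "(transpose_mat W *\<^sub>v x) \<bullet> (transpose_mat W *\<^sub>v x) = x \<bullet> x"
proof -
  have "(transpose_mat W *\<^sub>v x) \<bullet> (transpose_mat W *\<^sub>v x) = x \<bullet> (W *\<^sub>v (transpose_mat W *\<^sub>v x))"
    using W x by (intro transpose_vec_mult_scalar) auto
  also have "W *\<^sub>v (transpose_mat W *\<^sub>v x) = (W * transpose_mat W) *\<^sub>v x"
    using W x by (simp add: assoc_mult_mat_vec[of _ n n _ n])
  finally show ?thesis using orthogonal_mat_right_inverse[OF W] x by simp
qed

lemma leading_cols_bessel:
  fixes W :: "real mat" and x :: "real vec"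
  assumes W: "W \<in> carrier_mat n n" "transpose_mat W * W = 1\<^sub>m n" and x: "x \<in> carrier_vec n"
    and p: "p \<le> n"
  shows "(transpose_mat (leading_cols W p) *\<^sub>v x) \<bullet> (transpose_mat (leading_cols W p) *\<^sub>v x) \<le> x \<bullet> x"
proof -
  have y: "transpose_mat (leading_cols W p) *\<^sub>v x \<in> carrier_vec p" by (simp add: carrier_vecI)
  have "(transpose_mat (leading_cols W p) *\<^sub>v x) \<bullet> (transpose_mat (leading_cols W p) *\<^sub>v x)
      = (\<Sum>j<p. (col W j \<bullet> x)\<^sup>2)"
    by (subst sprod_self_sum_sq[OF y]) (use W(1) p in \<open>simp add: col_leading_cols\<close>)
  also have "\<dots> \<le> (\<Sum>j<n. (col W j \<bullet> x)\<^sup>2)" by (rule sum_mono2) (use p in auto)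
  also have "\<dots> = (transpose_mat W *\<^sub>v x) \<bullet> (transpose_mat W *\<^sub>v x)"
    using W(1) x by (simp add: sprod_self_sum_sq[of _ n])
  also have "\<dots> = x \<bullet> x" by (rule orthogonal_mat_vec_sprod_self[OF W x])
  finally show ?thesis .
qed

lemma leading_cols_sprod_le_one:
  fixes W1 W2 :: "real mat" and u v :: "real vec"
  assumes W1: "W1 \<in> carrier_mat n n" "transpose_mat W1 * W1 = 1\<^sub>m n"
    and W2: "W2 \<in> carrier_mat n n" "transpose_mat W2 * W2 = 1\<^sub>m n"
    and u: "u \<in> carrier_vec n" "u \<bullet> u = 1" and v: "v \<in> carrier_vec n" "v \<bullet> v = 1"
    and p: "p \<le> n"
  shows "(transpose_mat (leading_cols W1 p) *\<^sub>v u) \<bullet> (transpose_mat (leading_cols W2 p) *\<^sub>v v) \<le> 1"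
proof -
  let ?a = "transpose_mat (leading_cols W1 p) *\<^sub>v u" and ?b = "transpose_mat (leading_cols W2 p) *\<^sub>v v"
  have ab: "?a \<in> carrier_vec p" "?b \<in> carrier_vec p" by (simp_all add: carrier_vecI)
  have "2 * (?a \<bullet> ?b) \<le> ?a \<bullet> ?a + ?b \<bullet> ?b" by (rule two_sprod_le_sprod_self_add[OF ab])
  also have "\<dots> \<le> u \<bullet> u + v \<bullet> v"
    using leading_cols_bessel[OF W1 u(1) p] leading_cols_bessel[OF W2 v(1) p] by (rule add_mono)
  finally show ?thesis using u(2) v(2) by simp
qed

text \<open>A case of von Neumann's trace inequality: with \<open>P, Q\<close> the leading columns of \<open>W1, W2\<close>,
  every diagonal entry of \<open>V\<^sup>T P Q\<^sup>T U\<close> is the inner product of two vectors of norm at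
  most 1, by Bessel's inequality.\<close>

lemma trace_leading_cols_le_singular_sum:
  fixes Z U S V W1 W2 :: "real mat"
  assumes Z: "Z \<in> carrier_mat n n" and svd: "is_svd Z U S V"
    and W1: "W1 \<in> carrier_mat n n" "transpose_mat W1 * W1 = 1\<^sub>m n"
    and W2: "W2 \<in> carrier_mat n n" "transpose_mat W2 * W2 = 1\<^sub>m n"
    and p: "p \<le> n"
  shows "trace (leading_cols W1 p * transpose_mat (leading_cols W2 p) * Z) \<le> (\<Sum>i<n. S $$ (i,i))"
proof -
  note sv = is_svdD[OF svd Z]
  define F where "F = transpose_mat (leading_cols W1 p)"
  define H where "H = transpose_mat (leading_cols W2 p)"
  have L1: "leading_cols W1 p \<in> carrier_mat n p" and L2: "leading_cols W2 p \<in> carrier_mat n p"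
    using W1(1) W2(1) by auto
  then have F: "F \<in> carrier_mat p n" and H: "H \<in> carrier_mat p n"
    unfolding F_def H_def by auto
  have FT: "transpose_mat F \<in> carrier_mat n p" using F by simp
  define T where "T = transpose_mat (F * V) * (H * U)"
  have T: "T \<in> carrier_mat n n"
    unfolding T_def by (rule mult_carrier_mat[of _ n p]) (use F H sv(1,3) in auto)
  have "leading_cols W1 p * transpose_mat (leading_cols W2 p) * Z
      = (transpose_mat F * H * U * S) * transpose_mat V"
    unfolding F_def H_def sv(9) using L1 L2 sv(1-3)
    by (simp add: assoc_mult_mat[of _ n p _ n _ n] assoc_mult_mat[of _ n n _ n _ n]
        assoc_mult_mat[of _ p n _ n _ n] assoc_mult_mat[of _ n p _ p _ n])
  then have "trace (leading_cols W1 p * transpose_mat (leading_cols W2 p) * Z)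
      = trace (transpose_mat V * (transpose_mat F * H * U * S))"
    using trace_mult_comm[OF mult_carrier_mat[OF mult_carrier_mat[OF mult_carrier_mat[OF FT H] sv(1)] sv(2)]]
      sv(3) by simp
  also have "transpose_mat V * (transpose_mat F * H * U * S) = T * S"
    unfolding T_def using F H sv(1-3)
    by (simp add: transpose_mult[OF F sv(3)] assoc_mult_mat[of _ n p _ n _ n]
        assoc_mult_mat[of _ n n _ n _ n] assoc_mult_mat[of _ p n _ n _ n] assoc_mult_mat[of _ n n _ p _ n])
  also have "trace (T * S) = (\<Sum>i<n. T $$ (i,i) * S $$ (i,i))"
    by (rule trace_mult_diagonal[OF T sv(2,6)])
  also have "\<dots> \<le> (\<Sum>i<n. S $$ (i,i))"
  proof (rule sum_mono)
    fix i assume "i \<in> {..<n}"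
    then have i: "i < n" by simp
    have "T $$ (i,i) = (F *\<^sub>v col V i) \<bullet> (H *\<^sub>v col U i)"
      unfolding T_def using F H sv(1,3) i by (simp add: mult_mat_vec_def)
    also have "\<dots> \<le> 1" unfolding F_def H_def
      using leading_cols_sprod_le_one[OF W1 W2 _ _ _ _ p] orthogonal_col_sprod[OF sv(1,4) i i]
        orthogonal_col_sprod[OF sv(3,5) i i] sv(1,3) i by simp
    finally show "T $$ (i,i) * S $$ (i,i) \<le> S $$ (i,i)"
      using sv(7)[of i] i mult_right_mono[of "T $$ (i,i)" 1 "S $$ (i,i)"] by simp
  qed
  finally show ?thesis .
qed

lemma trace_svd_align:
  fixes Z U S V :: "real mat"
  assumes Z: "Z \<in> carrier_mat n n" and svd: "is_svd Z U S V"
  shows "trace (V * transpose_mat U * Z) = (\<Sum>i<n. S $$ (i,i))"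
proof -
  note sv = is_svdD[OF svd Z]
  have UT: "transpose_mat U \<in> carrier_mat n n" and VT: "transpose_mat V \<in> carrier_mat n n"
    using sv(1,3) by auto
  have "V * transpose_mat U * Z = V * (transpose_mat U * U) * S * transpose_mat V"
    unfolding sv(9) using sv(1-3) UT VT by (simp add: assoc_mult_mat[of _ n n _ n _ n])
  also have "\<dots> = (V * S) * transpose_mat V" using sv(3,4) by simp
  finally have "trace (V * transpose_mat U * Z) = trace (transpose_mat V * (V * S))"
    using trace_mult_comm[of "V * S" n n "transpose_mat V"] sv(2,3) VT by simp
  also have "transpose_mat V * (V * S) = S"
    using sv(2,3,5) VT by (simp add: assoc_mult_mat[of _ n n _ n _ n, symmetric])
  finally show ?thesis unfolding trace_def using sv(2) by simp
qed

theorem nuclear_norm_svd: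
  fixes Z U S V :: "real mat"
  assumes Z: "Z \<in> carrier_mat n n" and svd: "is_svd Z U S V"
  shows "nuclear_norm Z = (\<Sum>i<n. S $$ (i,i))"
proof -
  \<comment> \<open>\<open>nuclear_norm\<close> is a definite description over all SVDs; any two of them bound each
    other's singular value sums through the trace inequality.\<close>
  have le: "(\<Sum>i<n. S2 $$ (i,i)) \<le> (\<Sum>i<n. S1 $$ (i,i))"
    if svd1: "is_svd Z U1 S1 V1" and svd2: "is_svd Z U2 S2 V2" for U1 S1 V1 U2 S2 V2
  proof -
    note sv2 = is_svdD[OF svd2 Z]
    have "(\<Sum>i<n. S2 $$ (i,i)) = trace (V2 * transpose_mat U2 * Z)"
      by (rule trace_svd_align[OF Z svd2, symmetric])
    also have "\<dots> \<le> (\<Sum>i<n. S1 $$ (i,i))"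
      using trace_leading_cols_le_singular_sum[OF Z svd1 sv2(3,5) sv2(1,4) le_refl]
      unfolding leading_cols_all[OF sv2(1)] leading_cols_all[OF sv2(3)] .
    finally show ?thesis .
  qed
  have dims: "min (dim_row Z) (dim_col Z) = n" using Z by simp
  show ?thesis unfolding nuclear_norm_def dims
  proof (rule the_equality)
    show "\<exists>U' S' V'. is_svd Z U' S' V' \<and> (\<Sum>i<n. S $$ (i,i)) = (\<Sum>i<n. S' $$ (i,i))"
      using svd by blast
  next
    fix s assume "\<exists>U' S' V'. is_svd Z U' S' V' \<and> s = (\<Sum>i<n. S' $$ (i,i))"
    then obtain U' S' V' where svd': "is_svd Z U' S' V'" and s: "s = (\<Sum>i<n. S' $$ (i,i))"
      by blast
    show "s = (\<Sum>i<n. S $$ (i,i))" unfolding s using le[OF svd svd'] le[OF svd' svd] by simp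
  qed
qed

lemma trace_leading_cols_le_nuclear_norm:
  fixes Z W :: "real mat"
  assumes Z: "Z \<in> carrier_mat n n" and W: "W \<in> carrier_mat n n" "transpose_mat W * W = 1\<^sub>m n"
    and p: "p \<le> n"
  shows "trace (leading_cols W p * transpose_mat (leading_cols W p) * Z) \<le> nuclear_norm Z"
proof -
  obtain U S V where svd: "is_svd Z U S V" using svd_exists[OF Z] by blast
  show ?thesis
    using trace_leading_cols_le_singular_sum[OF Z svd W W p] nuclear_norm_svd[OF Z svd] by simp
qed

lemma nuclear_norm_leading_cols_proj:
  fixes V :: "real mat"
  assumes V: "V \<in> carrier_mat n n" "transpose_mat V * V = 1\<^sub>m n" and r: "r \<le> n"
  shows "nuclear_norm (leading_cols V r * transpose_mat (leading_cols V r)) = real r"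
proof -
  define P where "P = mat n n (\<lambda>(i,j). if i = j \<and> i < r then 1 else (0 :: real))"
  have P: "P \<in> carrier_mat n n" unfolding P_def by simp
  have "leading_cols V r * transpose_mat (leading_cols V r)
      = leading_cols V r * 1\<^sub>m r * transpose_mat (leading_cols V r)"
    using V(1) by simp
  also have "\<dots> = V * P * transpose_mat V"
    unfolding one_mat_def P_def by (rule leading_cols_diag_mult[OF V(1) V(1) r r])
  finally have Z: "leading_cols V r * transpose_mat (leading_cols V r) = V * P * transpose_mat V" .
  have "is_svd (V * P * transpose_mat V) V P V"
    unfolding is_svd_def Let_def using V P by (auto simp: P_def)
  then have "nuclear_norm (V * P * transpose_mat V) = (\<Sum>i<n. P $$ (i,i))"
    using nuclear_norm_svd[of _ n] V P by simp
  also have "\<dots> = (\<Sum>i<r. 1)"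
    unfolding P_def by (rule sum.mono_neutral_cong_right) (use r in auto)
  finally show ?thesis unfolding Z by simp
qed

section \<open>The Frobenius norm and the Eckart--Young bound\<close>

definition frob_sq :: "real mat \<Rightarrow> real" where
  "frob_sq M = (\<Sum>i<dim_row M. \<Sum>j<dim_col M. (M $$ (i,j))\<^sup>2)"

lemma frob_norm_power2: "(frob_norm M)\<^sup>2 = frob_sq M"
  unfolding frob_norm_def frob_sq_def by (simp add: sum_nonneg)

lemma frob_sq_nonneg: "0 \<le> frob_sq M"
  unfolding frob_sq_def by (simp add: sum_nonneg)

lemma frob_sq_transpose [simp]: "frob_sq (transpose_mat M) = frob_sq M"
  unfolding frob_sq_def by (simp add: sum.swap[of _ "{..<dim_col M}"])

lemma frob_sq_trace:
  fixes M :: "real mat"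
  assumes M: "M \<in> carrier_mat p q"
  shows "frob_sq M = trace (transpose_mat M * M)"
proof -
  have MT: "transpose_mat M \<in> carrier_mat q p" using M by simp
  have "trace (transpose_mat M * M) = (\<Sum>j<q. (transpose_mat M * M) $$ (j,j))"
    unfolding trace_def using M by simp
  also have "\<dots> = (\<Sum>j<q. \<Sum>i<p. (M $$ (i,j))\<^sup>2)"
    by (rule sum.cong[OF refl], subst index_mult_mat_sum[OF MT M]) (use M in \<open>auto simp: power2_eq_square\<close>)
  also have "\<dots> = frob_sq M" unfolding frob_sq_def using M by (simp add: sum.swap[of _ "{..<q}"])
  finally show ?thesis by simp
qed

lemma frob_sq_orthogonal_left:
  fixes W M :: "real mat"
  assumes W: "W \<in> carrier_mat p q" "transpose_mat W * W = 1\<^sub>m q" and M: "M \<in> carrier_mat q r"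
  shows "frob_sq (W * M) = frob_sq M"
proof -
  have "transpose_mat (W * M) * (W * M) = transpose_mat M * (transpose_mat W * W) * M"
    using W(1) M by (simp add: transpose_mult[OF W(1) M] assoc_mult_mat[of _ r q _ q _ r]
        assoc_mult_mat[of _ q p _ q _ r] assoc_mult_mat[of _ r q _ p _ r])
  also have "\<dots> = transpose_mat M * M" unfolding W(2) using M by simp
  finally show ?thesis using frob_sq_trace[of "W * M" p r] frob_sq_trace[OF M] W M by simp
qed

lemma frob_sq_orthogonal_right:
  fixes M V :: "real mat"
  assumes V: "V \<in> carrier_mat n n" "transpose_mat V * V = 1\<^sub>m n" and M: "M \<in> carrier_mat m n"
  shows "frob_sq (M * transpose_mat V) = frob_sq M"
proof -
  have "frob_sq (M * transpose_mat V) = frob_sq (V * transpose_mat M)"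
    using frob_sq_transpose[of "M * transpose_mat V"] M V by (simp add: transpose_mult)
  also have "\<dots> = frob_sq M" using frob_sq_orthogonal_left[OF V, of "transpose_mat M" m] M by simp
  finally show ?thesis .
qed

lemma frob_sq_orthogonal_conj:
  fixes U M V :: "real mat"
  assumes U: "U \<in> carrier_mat m m" "transpose_mat U * U = 1\<^sub>m m"
    and V: "V \<in> carrier_mat n n" "transpose_mat V * V = 1\<^sub>m n" and M: "M \<in> carrier_mat m n"
  shows "frob_sq (U * M * transpose_mat V) = frob_sq M"
proof -
  have "U * M * transpose_mat V = U * (M * transpose_mat V)"
    using U M V by (simp add: assoc_mult_mat[of _ m m _ n _ n])
  then have "frob_sq (U * M * transpose_mat V) = frob_sq (M * transpose_mat V)"
    using frob_sq_orthogonal_left[OF U, of "M * transpose_mat V" n] M V by simp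
  also have "\<dots> = frob_sq M" by (rule frob_sq_orthogonal_right[OF V M])
  finally show ?thesis .
qed

lemma frob_sq_diagonal:
  fixes D :: "real mat"
  assumes D: "D \<in> carrier_mat m n" "diagonal_mat D"
  shows "frob_sq D = (\<Sum>i<min m n. (D $$ (i,i))\<^sup>2)"
proof -
  have row: "(\<Sum>j<n. (D $$ (i,j))\<^sup>2) = (if i < n then (D $$ (i,i))\<^sup>2 else 0)" if i: "i < m" for i
  proof (cases "i < n")
    case True
    have "(\<Sum>j<n. (D $$ (i,j))\<^sup>2) = (\<Sum>j\<in>{i}. (D $$ (i,j))\<^sup>2)"
      by (rule sum.mono_neutral_right) (use D i True in \<open>auto simp: diagonal_mat_def\<close>)
    then show ?thesis using True by simp
  next
    case False
    then show ?thesis using D i by (auto simp: diagonal_mat_def intro!: sum.neutral)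
  qed
  have "frob_sq D = (\<Sum>i<m. if i < n then (D $$ (i,i))\<^sup>2 else 0)"
    unfolding frob_sq_def using D(1) row by simp
  also have "\<dots> = (\<Sum>i<min m n. (D $$ (i,i))\<^sup>2)"
    by (rule sum.mono_neutral_cong_right) auto
  finally show ?thesis .
qed

lemma frob_sq_mult_diagonal:
  fixes B S :: "real mat"
  assumes B: "B \<in> carrier_mat k m" and S: "S \<in> carrier_mat m n" "diagonal_mat S"
  shows "frob_sq (B * S) = (\<Sum>j<min m n. (S $$ (j,j))\<^sup>2 * (\<Sum>a<k. (B $$ (a,j))\<^sup>2))"
proof -
  have "frob_sq (B * S) = (\<Sum>a<k. \<Sum>j<n. ((B * S) $$ (a,j))\<^sup>2)"
    unfolding frob_sq_def using B S(1) by simp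
  also have "\<dots> = (\<Sum>a<k. \<Sum>j<n. if j < m then (S $$ (j,j))\<^sup>2 * (B $$ (a,j))\<^sup>2 else 0)"
    by (intro sum.cong refl, subst mult_diagonal_index_if[OF B S]) (auto simp: power_mult_distrib)
  also have "\<dots> = (\<Sum>a<k. \<Sum>j<min m n. (S $$ (j,j))\<^sup>2 * (B $$ (a,j))\<^sup>2)"
    by (intro sum.cong refl sum.mono_neutral_cong_right) auto
  also have "\<dots> = (\<Sum>j<min m n. (S $$ (j,j))\<^sup>2 * (\<Sum>a<k. (B $$ (a,j))\<^sup>2))"
    by (subst sum.swap) (simp add: sum_distrib_left)
  finally show ?thesis .
qed

lemma frob_sq_projection_split:
  fixes Q E :: "real mat"
  assumes Q: "Q \<in> carrier_mat m m" and sym: "transpose_mat Q = Q" and QQ: "Q * Q = Q"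
    and E: "E \<in> carrier_mat m p"
  shows "frob_sq E = frob_sq (Q * E) + frob_sq ((1\<^sub>m m - Q) * E)"
proof -
  define R where "R = 1\<^sub>m m - Q"
  have R: "R \<in> carrier_mat m m" unfolding R_def using Q by (simp add: minus_carrier_mat)
  have "Q * R = Q * 1\<^sub>m m - Q * Q"
    unfolding R_def by (rule mult_minus_distrib_mat) (use Q in auto)
  then have QR: "Q * R = 0\<^sub>m m m" using Q QQ by (intro eq_matI) auto
  have "R * R = 1\<^sub>m m * R - Q * R"
    unfolding R_def by (rule minus_mult_distrib_mat) (use Q R in \<open>auto simp: R_def\<close>)
  then have RR: "R * R = R" unfolding QR using R by (intro eq_matI) auto
  have symR: "transpose_mat R = R"
    unfolding R_def by (subst transpose_minus[of _ m m]) (use Q sym in auto)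
  have ET: "transpose_mat E \<in> carrier_mat p m" using E by simp
  have proj: "frob_sq (P * E) = trace (transpose_mat E * (P * E))"
    if P: "P \<in> carrier_mat m m" and symP: "transpose_mat P = P" and PP: "P * P = P" for P
  proof -
    have "frob_sq (P * E) = trace (transpose_mat (P * E) * (P * E))"
      using frob_sq_trace[of "P * E" m p] P E by simp
    also have "transpose_mat (P * E) * (P * E) = transpose_mat E * (P * P * E)"
      using transpose_mult[OF P E] symP P E ET
      by (simp add: assoc_mult_mat[of _ p m _ m _ p] assoc_mult_mat[of _ m m _ m _ p])
    finally show ?thesis using PP by simp
  qed
  have "transpose_mat E * (R * E) = transpose_mat E * E - transpose_mat E * (Q * E)"
    unfolding R_def using ET E Q
    by (simp add: minus_mult_distrib_mat[of _ m m] mult_minus_distrib_mat[of _ p m])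
  then have "trace (transpose_mat E * (R * E)) = trace (transpose_mat E * E) - trace (transpose_mat E * (Q * E))"
    using trace_minus[of "transpose_mat E * E" p "transpose_mat E * (Q * E)"] ET E Q by simp
  then show ?thesis using proj[OF Q sym QQ] proj[OF R symR RR] frob_sq_trace[OF E] unfolding R_def by simp
qed

lemma sum_lessThan_split:
  fixes f :: "nat \<Rightarrow> 'a :: comm_monoid_add"
  assumes "k \<le> N"
  shows "(\<Sum>j<N. f j) = (\<Sum>j<k. f j) + (\<Sum>j\<in>{k..<N}. f j)"
proof -
  have "{..<N} = {..<k} \<union> {k..<N}" using assms by auto
  then show ?thesis by (simp add: sum.union_disjoint ivl_disj_int)
qed

lemma sum_atLeastLessThan_eq_diff:
  fixes c :: "nat \<Rightarrow> real"
  shows "(\<Sum>i\<in>{k..<N}. c i) = (\<Sum>i<N. c i) - (\<Sum>i<min k N. c i)"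
  by (cases "k \<le> N") (simp_all add: sum_lessThan_split[of k N c])

text \<open>Rearrangement: compare every term with the threshold \<open>c k\<close>.\<close>

lemma weighted_sum_le_prefix_sum:
  fixes c g :: "nat \<Rightarrow> real"
  assumes dec: "\<And>i j. i \<le> j \<Longrightarrow> j < N \<Longrightarrow> c j \<le> c i"
    and c_nonneg: "\<And>j. j < N \<Longrightarrow> 0 \<le> c j"
    and g_nonneg: "\<And>j. j < N \<Longrightarrow> 0 \<le> g j" and g_le1: "\<And>j. j < N \<Longrightarrow> g j \<le> 1"
    and mass: "(\<Sum>j<N. g j) \<le> real k"
  shows "(\<Sum>j<N. c j * g j) \<le> (\<Sum>j<min k N. c j)"
proof (cases "N \<le> k")
  case True
  have "(\<Sum>j<N. c j * g j) \<le> (\<Sum>j<N. c j)"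
    by (rule sum_mono) (use c_nonneg g_le1 in \<open>auto intro: mult_left_le\<close>)
  then show ?thesis using True by (simp add: min_def)
next
  case False
  then have kN: "k < N" by simp
  have head: "c j * (g j - 1) \<le> c k * (g j - 1)" if "j < k" for j
    using dec[of j k] g_le1[of j] that kN by (simp add: mult_right_mono_neg)
  have tail: "c j * g j \<le> c k * g j" if "j \<in> {k..<N}" for j
    using dec[of k j] g_nonneg[of j] that by (simp add: mult_right_mono)
  have "(\<Sum>j<N. c j * g j) - (\<Sum>j<k. c j) = (\<Sum>j<k. c j * (g j - 1)) + (\<Sum>j\<in>{k..<N}. c j * g j)"
    using sum_lessThan_split[of k N "\<lambda>j. c j * g j"] kN by (simp add: algebra_simps sum_subtractf)
  also have "\<dots> \<le> (\<Sum>j<k. c k * (g j - 1)) + (\<Sum>j\<in>{k..<N}. c k * g j)"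
    using head tail by (intro add_mono sum_mono) auto
  also have "\<dots> = c k * ((\<Sum>j<N. g j) - real k)"
    using sum_lessThan_split[of k N g] kN by (simp add: algebra_simps sum_subtractf sum_distrib_left)
  also have "\<dots> \<le> 0" using c_nonneg[OF kN] mass by (simp add: mult_nonneg_nonpos)
  finally show ?thesis using kN by simp
qed

lemma frob_sq_leading_cols_mult_orthogonal:
  fixes W U :: "real mat"
  assumes W: "W \<in> carrier_mat m m" "transpose_mat W * W = 1\<^sub>m m" and k: "k \<le> m"
    and U: "U \<in> carrier_mat m m" "transpose_mat U * U = 1\<^sub>m m"
  shows "frob_sq (transpose_mat (leading_cols W k) * U) = real k"
proof -
  have Wk: "leading_cols W k \<in> carrier_mat m k" using W(1) by simp
  have "frob_sq (transpose_mat (leading_cols W k) * U) = frob_sq (transpose_mat U * leading_cols W k)"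
    using frob_sq_transpose[of "transpose_mat (leading_cols W k) * U"] Wk U(1) by (simp add: transpose_mult)
  also have "\<dots> = trace (transpose_mat (leading_cols W k) * leading_cols W k)"
    using frob_sq_orthogonal_left[of "transpose_mat U" m m "leading_cols W k" k]
      orthogonal_mat_right_inverse[OF U] U(1) Wk frob_sq_trace[OF Wk] by simp
  finally show ?thesis using leading_cols_orthonormal[OF W k] by simp
qed

lemma frob_sq_leading_cols_proj_le:
  fixes X U S V W :: "real mat"
  assumes X: "X \<in> carrier_mat m n" and svd: "is_svd X U S V"
    and W: "W \<in> carrier_mat m m" "transpose_mat W * W = 1\<^sub>m m" and k: "k \<le> m"
  shows "frob_sq (transpose_mat (leading_cols W k) * X) \<le> (\<Sum>j<min k (min m n). (S $$ (j,j))\<^sup>2)"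
proof -
  note sv = is_svdD[OF svd X]
  define N where "N = min m n"
  define B where "B = transpose_mat (leading_cols W k) * U"
  define g where "g j = (\<Sum>a<k. (B $$ (a,j))\<^sup>2)" for j
  have Wk: "leading_cols W k \<in> carrier_mat m k" using W(1) by simp
  have B: "B \<in> carrier_mat k m" unfolding B_def using Wk sv(1) by simp
  have "transpose_mat (leading_cols W k) * X = B * S * transpose_mat V"
    unfolding sv(9) B_def using Wk sv(1-3)
    by (simp add: assoc_mult_mat[of _ k m _ m _ n] assoc_mult_mat[of _ k m _ n _ n]
        assoc_mult_mat[of _ m m _ n _ n])
  then have "frob_sq (transpose_mat (leading_cols W k) * X) = frob_sq (B * S)"
    using frob_sq_orthogonal_right[OF sv(3,5), of "B * S" k] B sv(2) by simp
  also have "\<dots> = (\<Sum>j<N. (S $$ (j,j))\<^sup>2 * g j)"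
    unfolding N_def g_def by (rule frob_sq_mult_diagonal[OF B sv(2,6)])
  also have "\<dots> \<le> (\<Sum>j<min k N. (S $$ (j,j))\<^sup>2)"
  proof (rule weighted_sum_le_prefix_sum)
    show "(S $$ (j,j))\<^sup>2 \<le> (S $$ (i,i))\<^sup>2" if "i \<le> j" "j < N" for i j
      using sv(7,8) that unfolding N_def by (meson le_less_trans power_mono)
    show "0 \<le> g j" for j unfolding g_def by (simp add: sum_nonneg)
    show "g j \<le> 1" if "j < N" for j
    proof -
      have j: "j < m" using that unfolding N_def by simp
      have "g j = (transpose_mat (leading_cols W k) *\<^sub>v col U j) \<bullet> (transpose_mat (leading_cols W k) *\<^sub>v col U j)"
        unfolding g_def B_def using Wk sv(1) j
        by (subst sprod_self_sum_sq[of _ k]) (auto simp: carrier_vecI mult_mat_vec_def)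
      also have "\<dots> \<le> col U j \<bullet> col U j"
        by (rule leading_cols_bessel[OF W _ k]) (use sv(1) in \<open>simp add: carrier_vecI\<close>)
      finally show ?thesis using orthogonal_col_sprod[OF sv(1,4) j j] by simp
    qed
    have "(\<Sum>j<m. g j) = frob_sq B"
      unfolding g_def frob_sq_def using B by (simp add: sum.swap[of _ "{..<m}"])
    also have "\<dots> = real k" unfolding B_def by (rule frob_sq_leading_cols_mult_orthogonal[OF W k sv(1,4)])
    finally have "(\<Sum>j<m. g j) = real k" .
    moreover have "(\<Sum>j<N. g j) \<le> (\<Sum>j<m. g j)"
      unfolding N_def g_def by (rule sum_mono2) (auto simp: sum_nonneg)
    ultimately show "(\<Sum>j<N. g j) \<le> real k" by simp
  qed simp
  finally show ?thesis unfolding N_def .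
qed

theorem svd_tail_le_frob_sq:
  fixes X U S V W A E :: "real mat"
  assumes X: "X \<in> carrier_mat m n" and svd: "is_svd X U S V"
    and W: "W \<in> carrier_mat m m" "transpose_mat W * W = 1\<^sub>m m" and k: "k \<le> m"
    and A: "A \<in> carrier_mat m n" and QA: "leading_cols W k * transpose_mat (leading_cols W k) * A = A"
    and E: "E \<in> carrier_mat m n" and XAE: "X = A + E"
  shows "(\<Sum>i\<in>{k..<min m n}. (S $$ (i,i))\<^sup>2) \<le> frob_sq E"
proof -
  note sv = is_svdD[OF svd X]
  define Wk where "Wk = leading_cols W k"
  define Q where "Q = Wk * transpose_mat Wk"
  define R where "R = 1\<^sub>m m - Q"
  have Wk: "Wk \<in> carrier_mat m k" "transpose_mat Wk * Wk = 1\<^sub>m k"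
    unfolding Wk_def using W(1) leading_cols_orthonormal[OF W k] by auto
  have Q: "Q \<in> carrier_mat m m" unfolding Q_def using Wk by simp
  have R: "R \<in> carrier_mat m m" unfolding R_def using Q by (simp add: minus_carrier_mat)
  have symQ: "transpose_mat Q = Q" unfolding Q_def using transpose_mult[of Wk m k "transpose_mat Wk" m] Wk by simp
  have "Q * Q = Wk * (transpose_mat Wk * Wk) * transpose_mat Wk"
    unfolding Q_def using Wk(1)
    by (simp add: assoc_mult_mat[of _ m k _ m _ m] assoc_mult_mat[of _ m k _ k _ m] assoc_mult_mat[of _ k m _ m _ k])
  then have QQ: "Q * Q = Q" unfolding Q_def using Wk by simp
  have "R * A = 1\<^sub>m m * A - Q * A"
    unfolding R_def by (rule minus_mult_distrib_mat) (use Q A in auto)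
  then have RA: "R * A = 0\<^sub>m m n" using QA A unfolding Q_def Wk_def by (intro eq_matI) auto
  have "R * X = R * A + R * E" unfolding XAE by (rule mult_add_distrib_mat[OF R A E])
  then have RX: "R * E = R * X" using RA R E by simp
  have "frob_sq (R * X) \<le> frob_sq E"
    using frob_sq_projection_split[OF Q symQ QQ E] frob_sq_nonneg[of "Q * E"] RX unfolding R_def by simp
  moreover have "frob_sq X = frob_sq (Q * X) + frob_sq (R * X)"
    unfolding R_def by (rule frob_sq_projection_split[OF Q symQ QQ X])
  moreover have "frob_sq (Q * X) = frob_sq (transpose_mat Wk * X)"
    unfolding Q_def using frob_sq_orthogonal_left[OF Wk, of "transpose_mat Wk * X" n] Wk X
    by (simp add: assoc_mult_mat[of _ m k _ m _ n])
  moreover have "frob_sq X = (\<Sum>i<min m n. (S $$ (i,i))\<^sup>2)"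
    using frob_sq_orthogonal_conj[OF sv(1,4) sv(3,5) sv(2)] frob_sq_diagonal[OF sv(2,6)] sv(9) by simp
  ultimately show ?thesis
    using frob_sq_leading_cols_proj_le[OF X svd W k, folded Wk_def]
      sum_atLeastLessThan_eq_diff[of "\<lambda>i. (S $$ (i,i))\<^sup>2" k "min m n"] by linarith
qed

lemma truncated_svd_error:
  fixes X U S V :: "real mat"
  assumes X: "X \<in> carrier_mat m n" and svd: "is_svd X U S V" and r: "r \<le> min m n"
  shows "frob_sq (X - leading_cols U r * mat r r (\<lambda>(i,j). if i = j then S $$ (i,i) else 0)
      * transpose_mat (leading_cols V r)) = (\<Sum>i\<in>{r..<min m n}. (S $$ (i,i))\<^sup>2)"
proof -
  note sv = is_svdD[OF svd X]
  define Sr where "Sr = mat m n (\<lambda>(i,j). if i = j \<and> i < r then S $$ (i,i) else 0)"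
  have Sr: "Sr \<in> carrier_mat m n" unfolding Sr_def by simp
  have SSr: "S - Sr \<in> carrier_mat m n" "diagonal_mat (S - Sr)"
    using sv(2,6) Sr by (auto simp: Sr_def diagonal_mat_def)
  have "leading_cols U r * mat r r (\<lambda>(i,j). if i = j then S $$ (i,i) else 0) * transpose_mat (leading_cols V r)
      = U * Sr * transpose_mat V"
    unfolding Sr_def using r by (intro leading_cols_diag_mult[OF sv(1) sv(3)]) auto
  moreover have "U * S * transpose_mat V - U * Sr * transpose_mat V = U * (S - Sr) * transpose_mat V"
    using sv(1-3) Sr
    by (simp add: mult_minus_distrib_mat[of U m m] minus_mult_distrib_mat[of _ m n _ _ n])
  ultimately have "frob_sq (X - leading_cols U r * mat r r (\<lambda>(i,j). if i = j then S $$ (i,i) else 0)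
      * transpose_mat (leading_cols V r)) = frob_sq (S - Sr)"
    using frob_sq_orthogonal_conj[OF sv(1,4) sv(3,5) SSr(1)] sv(9) by simp
  also have "\<dots> = (\<Sum>i<min m n. ((S - Sr) $$ (i,i))\<^sup>2)" by (rule frob_sq_diagonal[OF SSr])
  also have "\<dots> = (\<Sum>i\<in>{r..<min m n}. (S $$ (i,i))\<^sup>2)"
    using sv(2) Sr by (intro sum.mono_neutral_cong_right) (auto simp: Sr_def)
  finally show ?thesis .
qed

section \<open>Lower bound for the self-expressive objective\<close>

lemma svd_leading_cols_proj_fixes:
  fixes A U S V :: "real mat"
  assumes A: "A \<in> carrier_mat m n" and svd: "is_svd A U S V" and k: "k \<le> m"
    and zero: "\<And>i. k \<le> i \<Longrightarrow> i < min m n \<Longrightarrow> S $$ (i,i) = 0"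
  shows "leading_cols U k * transpose_mat (leading_cols U k) * A = A"
proof -
  note sv = is_svdD[OF svd A]
  define P where "P = mat m m (\<lambda>(i,j). if i = j \<and> i < k then 1 else (0 :: real))"
  have P: "P \<in> carrier_mat m m" "diagonal_mat P" unfolding P_def by (auto simp: diagonal_mat_def)
  have "leading_cols U k * transpose_mat (leading_cols U k)
      = leading_cols U k * 1\<^sub>m k * transpose_mat (leading_cols U k)"
    using sv(1) by simp
  also have "\<dots> = U * P * transpose_mat U"
    unfolding one_mat_def P_def by (rule leading_cols_diag_mult[OF sv(1) sv(1) k k])
  finally have "leading_cols U k * transpose_mat (leading_cols U k) * A
      = U * (P * (transpose_mat U * U) * S) * transpose_mat V"
    unfolding sv(9) using P(1) sv(1-3)
    by (simp add: assoc_mult_mat[of _ m m _ m _ m] assoc_mult_mat[of _ m m _ m _ n] assoc_mult_mat[of _ m m _ n _ n])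
  also have "P * (transpose_mat U * U) * S = S"
  proof (rule eq_matI)
    fix i j assume "i < dim_row S" "j < dim_col S"
    then have i: "i < m" and j: "j < n" using sv(2) by auto
    have "(P * (transpose_mat U * U) * S) $$ (i,j) = P $$ (i,i) * S $$ (i,j)"
      unfolding sv(4) using diagonal_mult_index[OF P sv(2) i i j] P(1) by simp
    also have "\<dots> = S $$ (i,j)"
      using zero[of i] sv(6) sv(2) i j unfolding P_def diagonal_mat_def by (cases "i = j") auto
    finally show "(P * (transpose_mat U * U) * S) $$ (i,j) = S $$ (i,j)" .
  qed (use P(1) sv(2) in auto)
  finally show ?thesis using sv(9) by simp
qed

lemma svd_right_fixed_leading_rows:
  fixes A U S V Z :: "real mat"
  assumes A: "A \<in> carrier_mat m n" and svd: "is_svd A U S V" and k: "k \<le> min m n"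
    and pos: "\<And>i. i < k \<Longrightarrow> 0 < S $$ (i,i)"
    and Z: "Z \<in> carrier_mat n n" and AZ: "A * Z = A"
  shows "transpose_mat (leading_cols V k) * Z = transpose_mat (leading_cols V k)"
proof -
  note sv = is_svdD[OF svd A]
  have "transpose_mat U * A = (transpose_mat U * U) * S * transpose_mat V"
    unfolding sv(9) using sv(1-3)
    by (simp add: assoc_mult_mat[of _ m m _ m _ n] assoc_mult_mat[of _ m m _ n _ n] assoc_mult_mat[of _ m n _ n _ n])
  then have UtA: "transpose_mat U * A = S * transpose_mat V" using sv(2,4) by simp
  have "S * (transpose_mat V * Z) = transpose_mat U * A * Z"
    unfolding UtA using sv(2,3) Z by (simp add: assoc_mult_mat[of _ m n _ n _ n])
  also have "\<dots> = transpose_mat U * (A * Z)" by (rule assoc_mult_mat) (use sv(1) A Z in auto)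
  also have "\<dots> = S * transpose_mat V" unfolding AZ UtA ..
  finally have SVZ: "S * (transpose_mat V * Z) = S * transpose_mat V" .
  show ?thesis
  proof (rule eq_matI)
    fix i b assume "i < dim_row (transpose_mat (leading_cols V k))" "b < dim_col (transpose_mat (leading_cols V k))"
    then have i: "i < k" and b: "b < n" using sv(3) by auto
    have im: "i < m" "i < n" using i k by auto
    have VZ: "transpose_mat V * Z \<in> carrier_mat n n" and VT: "transpose_mat V \<in> carrier_mat n n"
      using sv(3) Z by auto
    have "S $$ (i,i) * (transpose_mat V * Z) $$ (i,b) = (S * (transpose_mat V * Z)) $$ (i,b)"
      by (rule diagonal_mult_index[OF sv(2,6) VZ im b, symmetric])
    also have "\<dots> = S $$ (i,i) * transpose_mat V $$ (i,b)"
      unfolding SVZ by (rule diagonal_mult_index[OF sv(2,6) VT im b])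
    finally have "S $$ (i,i) * (transpose_mat V * Z) $$ (i,b) = S $$ (i,i) * transpose_mat V $$ (i,b)" .
    then have "(transpose_mat V * Z) $$ (i,b) = transpose_mat V $$ (i,b)" using pos[OF i] by simp
    then show "(transpose_mat (leading_cols V k) * Z) $$ (i,b) = transpose_mat (leading_cols V k) $$ (i,b)"
      using sv(3) Z i b k by (simp add: col_leading_cols)
  qed (use sv(3) Z in auto)
qed

lemma nuclear_norm_ge_fixed_rank:
  fixes Z W :: "real mat"
  assumes Z: "Z \<in> carrier_mat n n" and W: "W \<in> carrier_mat n n" "transpose_mat W * W = 1\<^sub>m n"
    and k: "k \<le> n" and fixed: "transpose_mat (leading_cols W k) * Z = transpose_mat (leading_cols W k)"
  shows "real k \<le> nuclear_norm Z"
proof -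
  have Wk: "leading_cols W k \<in> carrier_mat n k" using W(1) by simp
  have "trace (leading_cols W k * transpose_mat (leading_cols W k) * Z)
      = trace (leading_cols W k * transpose_mat (leading_cols W k))"
    using fixed Wk Z by (simp add: assoc_mult_mat[of _ n k _ n _ n])
  also have "\<dots> = trace (transpose_mat (leading_cols W k) * leading_cols W k)"
    by (rule trace_mult_comm) (use Wk in auto)
  also have "\<dots> = real k" using leading_cols_orthonormal[OF W k] by simp
  finally show ?thesis using trace_leading_cols_le_nuclear_norm[OF Z W k] by simp
qed

theorem self_expressive_objective_lower_bound:
  fixes X U S V A Z E :: "real mat"
  assumes X: "X \<in> carrier_mat m n" and svd: "is_svd X U S V"
    and A: "A \<in> carrier_mat m n" and Z: "Z \<in> carrier_mat n n" and E: "E \<in> carrier_mat m n"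
    and AZ: "A = A * Z" and XAE: "X = A + E"
  shows "\<exists>k. real k \<le> nuclear_norm Z \<and> (\<Sum>i\<in>{k..<min m n}. (S $$ (i,i))\<^sup>2) \<le> frob_sq E"
proof -
  obtain UA SA VA where svdA: "is_svd A UA SA VA" using svd_exists[OF A] by blast
  note svA = is_svdD[OF svdA A]
  have "\<exists>k\<le>min m n. (\<forall>i<k. 0 < SA $$ (i,i)) \<and> (\<forall>i. k \<le> i \<longrightarrow> i < min m n \<longrightarrow> SA $$ (i,i) = 0)"
    by (rule nonincreasing_nonneg_positive_prefix) (use svA(7,8) in auto)
  then obtain k where k: "k \<le> min m n" and pos: "\<forall>i<k. 0 < SA $$ (i,i)"
    and zero: "\<forall>i. k \<le> i \<longrightarrow> i < min m n \<longrightarrow> SA $$ (i,i) = 0" by blast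
  have "real k \<le> nuclear_norm Z"
    using nuclear_norm_ge_fixed_rank[OF Z svA(3,5) _ svd_right_fixed_leading_rows[OF A svdA k _ Z AZ[symmetric]]]
      k pos by simp
  moreover have "(\<Sum>i\<in>{k..<min m n}. (S $$ (i,i))\<^sup>2) \<le> frob_sq E"
    using svd_tail_le_frob_sq[OF X svd svA(1,4) _ A svd_leading_cols_proj_fixes[OF A svdA] E XAE] k zero
    by simp
  ultimately show ?thesis by blast
qed

lemma truncated_svd_feasible:
  fixes X U S V :: "real mat"
  assumes X: "X \<in> carrier_mat m n" and svd: "is_svd X U S V" and r: "r \<le> min m n"
  defines "A \<equiv> leading_cols U r * mat r r (\<lambda>(i,j). if i = j then S $$ (i,i) else 0)
      * transpose_mat (leading_cols V r)"
    and "Z \<equiv> leading_cols V r * transpose_mat (leading_cols V r)"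
  shows "A \<in> carrier_mat m n" "Z \<in> carrier_mat n n" "A = A * Z"
proof -
  note sv = is_svdD[OF svd X]
  define M where "M = leading_cols U r * mat r r (\<lambda>(i,j). if i = j then S $$ (i,i) else 0)"
  have M: "M \<in> carrier_mat m r" unfolding M_def using leading_cols_carrier[OF sv(1), of r] by simp
  have Vr: "leading_cols V r \<in> carrier_mat n r" using sv(3) by simp
  show "A \<in> carrier_mat m n" "Z \<in> carrier_mat n n" unfolding A_def Z_def M_def[symmetric] using M Vr by auto
  have "A * Z = M * (transpose_mat (leading_cols V r) * (leading_cols V r * transpose_mat (leading_cols V r)))"
    unfolding A_def Z_def M_def[symmetric] by (rule assoc_mult_mat[of _ m r _ n _ n]) (use M Vr in auto)
  also have "transpose_mat (leading_cols V r) * (leading_cols V r * transpose_mat (leading_cols V r))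
      = (transpose_mat (leading_cols V r) * leading_cols V r) * transpose_mat (leading_cols V r)"
    by (rule assoc_mult_mat[of _ r n _ r _ n, symmetric]) (use Vr in auto)
  also have "transpose_mat (leading_cols V r) * leading_cols V r = 1\<^sub>m r"
    using leading_cols_orthonormal[OF sv(3,5)] r by simp
  finally show "A = A * Z" unfolding A_def M_def[symmetric] using Vr by simp
qed

lemma optimal_rank_le:
  fixes t :: "nat \<Rightarrow> real"
  assumes opt: "real r + lam * t r \<le> real N + lam * t N"
    and "0 \<le> lam" "0 \<le> t r" "t N = 0"
  shows "r \<le> N"
proof -
  have "real r + lam * t r \<le> real N" using opt assms(4) by simp
  then have "real r \<le> real N" using mult_nonneg_nonneg[OF assms(2,3)] by linarith
  then show ?thesis by simp
qed

theorem corollary2: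
  fixes X U S V :: "real mat" and m n r :: nat and lam :: real
  assumes X: "X \<in> carrier_mat m n"
    and lam: "lam > 0"
    and svd: "is_svd X U S V"
    and r_opt: "\<forall>k::nat. real r + lam * (\<Sum>i\<in>{r..<min m n}. (S $$ (i, i))\<^sup>2)
                  \<le> real k + lam * (\<Sum>i\<in>{k..<min m n}. (S $$ (i, i))\<^sup>2)"
  defines "U1 \<equiv> mat_of_cols m (map (col U) [0..<r])"
    and "V1 \<equiv> mat_of_cols n (map (col V) [0..<r])"
    and "\<Sigma>1 \<equiv> mat r r (\<lambda>(i, j). if i = j then S $$ (i, i) else 0)"
  defines "Astar \<equiv> U1 * \<Sigma>1 * transpose_mat V1"
    and "Zstar \<equiv> V1 * transpose_mat V1"
  defines "Estar \<equiv> X - Astar"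
  shows "Astar \<in> carrier_mat m n \<and> Zstar \<in> carrier_mat n n \<and> Estar \<in> carrier_mat m n \<and>
         Astar = Astar * Zstar \<and> X = Astar + Estar \<and>
         (\<forall>A Z E. A \<in> carrier_mat m n \<longrightarrow> Z \<in> carrier_mat n n \<longrightarrow> E \<in> carrier_mat m n \<longrightarrow>
            A = A * Z \<longrightarrow> X = A + E \<longrightarrow>
            nuclear_norm Zstar + lam * (frob_norm Estar)\<^sup>2
              \<le> nuclear_norm Z + lam * (frob_norm E)\<^sup>2)"
proof -
  note sv = is_svdD[OF svd X]
  define tail where "tail k = (\<Sum>i\<in>{k..<min m n}. (S $$ (i,i))\<^sup>2)" for k
  have opt: "real r + lam * tail r \<le> real k + lam * tail k" for k
    using r_opt unfolding tail_def by blast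
  have r: "r \<le> min m n"
    by (rule optimal_rank_le[OF opt[of "min m n"]]) (use lam in \<open>auto simp: tail_def sum_nonneg\<close>)
  have U1: "U1 = leading_cols U r" and V1: "V1 = leading_cols V r"
    unfolding U1_def V1_def using sv(1,3) r by (simp_all add: mat_of_cols_map_col)
  note feasible = truncated_svd_feasible[OF X svd r, folded \<Sigma>1_def U1 V1, folded Astar_def Zstar_def]
  have objective: "nuclear_norm Zstar + lam * (frob_norm Estar)\<^sup>2 = real r + lam * tail r"
    unfolding Zstar_def Estar_def Astar_def U1 V1 \<Sigma>1_def tail_def frob_norm_power2
    using nuclear_norm_leading_cols_proj[OF sv(3,5)] truncated_svd_error[OF X svd r] r by simp
  have "nuclear_norm Zstar + lam * (frob_norm Estar)\<^sup>2 \<le> nuclear_norm Z + lam * (frob_norm E)\<^sup>2"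
    if AZE: "A \<in> carrier_mat m n" "Z \<in> carrier_mat n n" "E \<in> carrier_mat m n" "A = A * Z" "X = A + E"
    for A Z E
  proof -
    obtain k where "real k \<le> nuclear_norm Z" "tail k \<le> frob_sq E"
      using self_expressive_objective_lower_bound[OF X svd AZE] unfolding tail_def by blast
    then have "real k + lam * tail k \<le> nuclear_norm Z + lam * (frob_norm E)\<^sup>2"
      using lam by (simp add: add_mono frob_norm_power2)
    then show ?thesis using objective opt[of k] by linarith
  qed
  moreover have "Estar \<in> carrier_mat m n" "X = Astar + Estar"
    unfolding Estar_def using feasible(1) X by auto
  ultimately show ?thesis using feasible by blast
qed

end
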